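(* Fix $\gamma\in[K]$. Suppose consistency holds, the valid index set satisfies $|\nu^*|\ge\gamma$, and there exists a function $q'(Z,A,X)$ with $(-1)^{1-A}q'(Z,A,X)\in\mathbb{H}_\gamma$ and $$\mathbb{E}\{q'(Z,A,X)\mid U,A,Z_{-\nu^*},X\}=\frac{1}{\mathbb{P}(A\mid U,Z_{-\nu^*},X)}\ \text{a.s.}$$ Then $\tau^*=\mathbb{E}\{q'(Z,1,X)AY-q'(Z,0,X)(1-A)Y\}$ and $\mathbb{E}\{q'(Z,A,X)\mid W,A,X\}=1/\mathbb{P}(A\mid W,X)$ a.s. Furthermore, suppose that for every $g\in\mathbb{H}_\gamma$, $\mathbb{E}\{h(W,A,X)g(Z,A,X)\}=0$ for all $h\in L_2(W,A,X)$ if and only if $g=0$ a.s. Then any function $q$ with $(-1)^{1-A}q\in\mathbb{H}_\gamma$ and $\mathbb{E}\{q(Z,A,X)\mid W,A,X\}=1/\mathbb{P}(A\mid W,X)$ equals $q'$ almost surely; consequently $\tau^*=\mathbb{E}\{q(Z,1,X)AY-q(Z,0,X)(1-A)Y\}$ for any such $q$.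
   Context: Setting: $(Y,A,Z,W,X,U)$ is a random vector with $Y\in\mathbb{R}$ an outcome, $A\in\{0,1\}$ a treatment, $Z=(Z_1,\dots,Z_K)$ candidate treatment confounding proxies, $W$ an outcome confounding proxy, $X$ measured covariates, and $U$ unobserved confounders; $Y(a)$, $a\in\{0,1\}$, are potential outcomes and $\tau^*=\mathbb{E}\{Y(1)-Y(0)\}$. Consistency means $Y=Y(a)$ almost surely when $A=a$. $[K]=\{1,\dots,K\}$; for $\nu\subseteq[K]$, $Z_\nu=(Z_j:j\in\nu)$ and $Z_{-\nu}=(Z_j:j\notin\nu)$; $\mathcal{P}_t([K])$ is the set of subsets of $[K]$ of cardinality $t$. $L_2(V)$ denotes square-integrable functions of $V$. A subset $\nu^*\subseteq[K]$ is the set of indices of valid treatment confounding proxies if for $a\in\{0,1\}$: (i) $A\perp\!\!\!\perp Y(a)\mid U,Z_{-\nu^*},X$; (ii) $0<\mathbb{P}(A=a\mid U,Z_{-\nu^*},X)<1$ a.s.; (iii) $Z_{\nu^*}\perp\!\!\!\perp Y\mid U,A,Z_{-\nu^*},X$ and $W\perp\!\!\!\perp (Z_{\nu^*},A)\mid U,Z_{-\nu^*},X$. Define $\mathbb{H}_\gamma=\{d\in L_2(Z,A,X):\mathbb{E}\{d(Z,A,X)\mid Z_{-\nu},X\}=0\ \forall\nu\in\mathcal{P}_\gamma([K])\}$. *)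

theory Defs
  imports "HOL-Probability.Probability"
begin

definition ev :: "'w measure \<Rightarrow> ('w \<Rightarrow> 'b) \<Rightarrow> 'b measure \<Rightarrow> 'w set set" where
  "ev M V N = {V -` B \<inter> space M | B. B \<in> sets N}"

definition Zev :: "'w measure \<Rightarrow> ('w \<Rightarrow> nat \<Rightarrow> 'z) \<Rightarrow> 'z measure \<Rightarrow> nat set \<Rightarrow> 'w set set" where
  "Zev M Z MZ J = (\<Union>j\<in>J. ev M (\<lambda>\<omega>. Z \<omega> j) MZ)"

definition gen :: "'w measure \<Rightarrow> 'w set set \<Rightarrow> 'w measure" where
  "gen M S = sigma (space M) S"

definition cprob :: "'w measure \<Rightarrow> 'w measure \<Rightarrow> 'w set \<Rightarrow> 'w \<Rightarrow> real" where
  "cprob M F E = real_cond_exp M F (indicator E)"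

definition cond_indep :: "'w measure \<Rightarrow> 'w measure \<Rightarrow> 'w set set \<Rightarrow> 'w set set \<Rightarrow> bool" where
  "cond_indep M F S1 S2 \<longleftrightarrow>
     (\<forall>E1\<in>sigma_sets (space M) S1. \<forall>E2\<in>sigma_sets (space M) S2.
        AE \<omega> in M. cprob M F (E1 \<inter> E2) \<omega> = cprob M F E1 \<omega> * cprob M F E2 \<omega>)"

text \<open>P(A | F) evaluated at the observed treatment: P(A = a | F)(w) with a = A w.\<close>
definition propA :: "'w measure \<Rightarrow> 'w measure \<Rightarrow> ('w \<Rightarrow> real) \<Rightarrow> 'w \<Rightarrow> real" where
  "propA M F A \<omega> = cprob M F {x \<in> space M. A x = A \<omega>} \<omega>"

definition signA :: "real \<Rightarrow> real" where
  "signA a = (if a = 1 then 1 else - 1)"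

definition L2fun :: "'w measure \<Rightarrow> ('w \<Rightarrow> 'v) \<Rightarrow> 'v measure \<Rightarrow> ('v \<Rightarrow> real) set" where
  "L2fun M V N = {d. d \<in> borel_measurable N \<and> integrable M (\<lambda>\<omega>. (d (V \<omega>))\<^sup>2)}"

abbreviation MZK :: "'z measure \<Rightarrow> nat \<Rightarrow> (nat \<Rightarrow> 'z) measure" where
  "MZK MZ K \<equiv> PiM {1..K} (\<lambda>_. MZ)"

definition F_UZX where
  "F_UZX M U MU Z MZ K \<nu> X MX =
     gen M (ev M U MU \<union> Zev M Z MZ ({1..K} - \<nu>) \<union> ev M X MX)"

definition F_UAZX where
  "F_UAZX M U MU A Z MZ K \<nu> X MX =
     gen M (ev M U MU \<union> ev M A borel \<union> Zev M Z MZ ({1..K} - \<nu>) \<union> ev M X MX)"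

definition Hgam :: "'w measure \<Rightarrow> ('w \<Rightarrow> nat \<Rightarrow> 'z) \<Rightarrow> 'z measure \<Rightarrow> nat \<Rightarrow> ('w \<Rightarrow> real)
     \<Rightarrow> ('w \<Rightarrow> 'x) \<Rightarrow> 'x measure \<Rightarrow> nat \<Rightarrow> ((nat \<Rightarrow> 'z) \<times> real \<times> 'x \<Rightarrow> real) set" where
  "Hgam M Z MZ K A X MX \<gamma> =
     {d \<in> L2fun M (\<lambda>\<omega>. (Z \<omega>, A \<omega>, X \<omega>)) (MZK MZ K \<Otimes>\<^sub>M (borel \<Otimes>\<^sub>M MX)).
        \<forall>\<nu>. \<nu> \<subseteq> {1..K} \<and> card \<nu> = \<gamma> \<longrightarrow>
          (AE \<omega> in M. real_cond_exp M (gen M (Zev M Z MZ ({1..K} - \<nu>) \<union> ev M X MX))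
                          (\<lambda>\<omega>. d (Z \<omega>, A \<omega>, X \<omega>)) \<omega> = 0)}"

definition valid_proxies where
  "valid_proxies M Y0 Y1 Y A Z MZ K W MW X MX U MU \<nu> \<longleftrightarrow>
     \<nu> \<subseteq> {1..K} \<and>
     cond_indep M (F_UZX M U MU Z MZ K \<nu> X MX) (ev M A borel) (ev M Y0 borel) \<and>
     cond_indep M (F_UZX M U MU Z MZ K \<nu> X MX) (ev M A borel) (ev M Y1 borel) \<and>
     (\<forall>a\<in>{0::real,1}. AE \<omega> in M.
        0 < cprob M (F_UZX M U MU Z MZ K \<nu> X MX) {x \<in> space M. A x = a} \<omega> \<and>
        cprob M (F_UZX M U MU Z MZ K \<nu> X MX) {x \<in> space M. A x = a} \<omega> < 1) \<and>
     cond_indep M (F_UAZX M U MU A Z MZ K \<nu> X MX) (Zev M Z MZ \<nu>) (ev M Y borel) \<and>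
     cond_indep M (F_UZX M U MU Z MZ K \<nu> X MX) (ev M W MW) (Zev M Z MZ \<nu> \<union> ev M A borel)"

end

theory Submission
  imports Defs
begin

(*
  Write G0 = sigma(U, Z_{-nu}, X), G1 = sigma(U, A, Z_{-nu}, X) and Q = q'(Z, A, X).  Since Q is a
  function of Z_nu and G1, and Z_nu is independent of Y given G1, the factor Q in E[1{A = a} Y Q] may be
  replaced by E[Q | G1] = 1 / P(A = a | G0).  Since A is independent of Y(a) given G0, the inverse
  propensity weight 1{A = a} / P(A = a | G0) may then be replaced by its conditional mean given G0,
  which is 1; this leaves E[Y(a)].  The same two steps give E[1{A = a} Q | G0] = 1, which the
  independence of W and (Z_nu, A) given G0 transfers to E[1{A = a} Q | W, X] = 1; conditioning in
  addition on the binary A turns this into E[Q | W, A, X] = 1 / P(A | W, X).  Finally, if q solves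
  this last equation as well, (-1)^(1-A) (q - q') lies in H_gamma and is orthogonal to every
  h(W, A, X), so completeness forces q = q' almost surely.
*)

definition Int_rects :: "'a measure \<Rightarrow> 'a set set \<Rightarrow> 'a measure \<Rightarrow> 'a set set" where
  "Int_rects M S G = {E \<inter> B | E B. E \<in> sigma_sets (space M) S \<and> B \<in> sets G}"

lemma level_set_subset_or_disjoint:
  assumes "D \<in> sigma_sets (space M) (ev M A N)"
  shows "{x \<in> space M. A x = a} \<subseteq> D \<or> {x \<in> space M. A x = a} \<inter> D = {}"
  using assms
proof (induction rule: sigma_sets.induct)
  case (Basic D)
  then obtain B where "D = A -` B \<inter> space M"
    unfolding ev_def by blast
  then show ?case by (cases "a \<in> B") auto
qed auto

lemma level_set_in_sets:
  assumes "A \<in> borel_measurable F" "space F = space M"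
  shows "{x \<in> space M. A x = (a :: real)} \<in> sets F"
proof -
  have "{x \<in> space M. A x = a} = A -` {a} \<inter> space F"
    using assms(2) by auto
  then show ?thesis
    using measurable_sets[OF assms(1)] by simp
qed

context prob_space
begin

lemma sigma_finite_subalgebra_of_subalgebra:
  "subalgebra M F \<Longrightarrow> sigma_finite_subalgebra M F"
  by (rule finite_measure_subalgebra_is_sigma_finite)
     (simp add: finite_measure_subalgebra_def finite_measure_subalgebra_axioms_def finite_measure_axioms)

lemma integrable_mult_of_square_integrable:
  fixes f g :: "'a \<Rightarrow> real"
  assumes [measurable]: "f \<in> borel_measurable M" "g \<in> borel_measurable M"
    and "integrable M (\<lambda>x. (f x)\<^sup>2)" "integrable M (\<lambda>x. (g x)\<^sup>2)"
  shows "integrable M (\<lambda>x. f x * g x)"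
proof (rule Bochner_Integration.integrable_bound)
  show "integrable M (\<lambda>x. (f x)\<^sup>2 + (g x)\<^sup>2)"
    using assms(3,4) by auto
  show "AE x in M. norm (f x * g x) \<le> norm ((f x)\<^sup>2 + (g x)\<^sup>2)"
  proof (rule AE_I2)
    fix x
    have "2 * \<bar>f x\<bar> * \<bar>g x\<bar> \<le> \<bar>f x\<bar>\<^sup>2 + \<bar>g x\<bar>\<^sup>2"
      by (rule sum_squares_bound)
    moreover have "0 \<le> \<bar>f x\<bar> * \<bar>g x\<bar>" by simp
    ultimately show "norm (f x * g x) \<le> norm ((f x)\<^sup>2 + (g x)\<^sup>2)"
      unfolding real_norm_def abs_mult power2_abs
      using abs_ge_self[of "(f x)\<^sup>2 + (g x)\<^sup>2"] by linarith
  qed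
qed simp

lemma square_integrable_diff:
  fixes f g :: "'a \<Rightarrow> real"
  assumes [measurable]: "f \<in> borel_measurable M" "g \<in> borel_measurable M"
    and "integrable M (\<lambda>x. (f x)\<^sup>2)" "integrable M (\<lambda>x. (g x)\<^sup>2)"
  shows "integrable M (\<lambda>x. (f x - g x)\<^sup>2)"
proof (rule Bochner_Integration.integrable_bound)
  show "integrable M (\<lambda>x. 2 * (f x)\<^sup>2 + 2 * (g x)\<^sup>2)"
    using assms(3,4) by auto
  show "AE x in M. norm ((f x - g x)\<^sup>2) \<le> norm (2 * (f x)\<^sup>2 + 2 * (g x)\<^sup>2)"
  proof (rule AE_I2)
    fix x
    have "0 \<le> (f x + g x)\<^sup>2" by simp
    then have "(f x - g x)\<^sup>2 \<le> 2 * (f x)\<^sup>2 + 2 * (g x)\<^sup>2"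
      unfolding power2_diff power2_sum by linarith
    then show "norm ((f x - g x)\<^sup>2) \<le> norm (2 * (f x)\<^sup>2 + 2 * (g x)\<^sup>2)"
      by simp
  qed
qed measurable

lemma square_integrable_cond_exp:
  assumes F: "subalgebra M F" and f: "f \<in> borel_measurable M" "integrable M (\<lambda>x. (f x)\<^sup>2)"
  shows "integrable M (\<lambda>x. (real_cond_exp M F f x)\<^sup>2)"
proof -
  interpret sigma_finite_subalgebra M F
    using F by (rule sigma_finite_subalgebra_of_subalgebra)
  show ?thesis
    using square_integrable_imp_integrable[OF f] f(2)
    by (intro integrable_convex_cond_exp[where I=UNIV and a=0 and b=0]) (auto intro: convex_power2)
qed

lemma integral_mult_diff_eq_zero_of_cond_exp_eq:
  fixes f g h :: "'a \<Rightarrow> real"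
  assumes F: "subalgebra M F" and h: "h \<in> borel_measurable F" "integrable M (\<lambda>x. (h x)\<^sup>2)"
    and f: "f \<in> borel_measurable M" "integrable M (\<lambda>x. (f x)\<^sup>2)"
    and g: "g \<in> borel_measurable M" "integrable M (\<lambda>x. (g x)\<^sup>2)"
    and eq: "AE x in M. real_cond_exp M F f x = real_cond_exp M F g x"
  shows "(\<integral>x. h x * (f x - g x) \<partial>M) = 0"
proof -
  interpret sigma_finite_subalgebra M F
    using F by (rule sigma_finite_subalgebra_of_subalgebra)
  have h_M [measurable]: "h \<in> borel_measurable M"
    using measurable_from_subalg[OF F h(1)] .
  have hf: "integrable M (\<lambda>x. h x * f x)" and hg: "integrable M (\<lambda>x. h x * g x)"
    using h_M h(2) f g by (auto intro: integrable_mult_of_square_integrable)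
  have "(\<integral>x. h x * (f x - g x) \<partial>M) = (\<integral>x. h x * f x \<partial>M) - (\<integral>x. h x * g x \<partial>M)"
    using hf hg by (simp add: right_diff_distrib)
  also have "\<dots> = (\<integral>x. h x * real_cond_exp M F f x \<partial>M) - (\<integral>x. h x * real_cond_exp M F g x \<partial>M)"
    using hf hg h f g by (simp add: real_cond_exp_intg(2))
  also have "(\<integral>x. h x * real_cond_exp M F f x \<partial>M) = (\<integral>x. h x * real_cond_exp M F g x \<partial>M)"
  proof (rule integral_cong_AE)
    show "AE x in M. h x * real_cond_exp M F f x = h x * real_cond_exp M F g x"
      using eq by eventually_elim simp
  qed measurable
  finally show ?thesis by simp
qed

lemma set_integral_space_Diff:
  fixes h :: "'a \<Rightarrow> real"
  assumes "C \<in> sets M" "integrable M h"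
  shows "(LINT x:(space M - C)|M. h x) = (\<integral>x. h x \<partial>M) - (LINT x:C|M. h x)"
proof -
  have "(LINT x:(space M - C)|M. h x) = (\<integral>x. h x - indicator C x * h x \<partial>M)"
    unfolding set_lebesgue_integral_def
    by (rule Bochner_Integration.integral_cong) (auto simp: indicator_def)
  also have "\<dots> = (\<integral>x. h x \<partial>M) - (LINT x:C|M. h x)"
    using assms integrable_mult_indicator[of C M h]
    by (simp add: set_lebesgue_integral_def Bochner_Integration.integral_diff)
  finally show ?thesis .
qed

lemma set_integral_eq_on_sigma_sets:
  fixes f g :: "'a \<Rightarrow> real"
  assumes E: "Int_stable E" "E \<subseteq> sets M" and f: "integrable M f" and g: "integrable M g"
    and total: "(\<integral>x. f x \<partial>M) = (\<integral>x. g x \<partial>M)"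
    and generators: "\<And>D. D \<in> E \<Longrightarrow> (LINT x:D|M. f x) = (LINT x:D|M. g x)"
    and D: "D \<in> sigma_sets (space M) E"
  shows "(LINT x:D|M. f x) = (LINT x:D|M. g x)"
proof -
  have sigma_E: "sigma_sets (space M) E \<subseteq> sets M"
    using E(2) by (rule sets.sigma_sets_subset)
  have "E \<subseteq> Pow (space M)"
    using E(2) sets.sets_into_space by blast
  from E(1) this D show ?thesis
  proof (induction rule: sigma_sets_induct_disjoint)
    case (basic C)
    then show ?case by (rule generators)
  next
    case empty
    then show ?case by (simp add: set_lebesgue_integral_def)
  next
    case (compl C)
    then have "C \<in> sets M" using sigma_E by blast
    then show ?case using compl.IH total set_integral_space_Diff[OF _ f] set_integral_space_Diff[OF _ g] by simp
  next
    case (union C)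
    then have C: "\<And>i. C i \<in> sets M" using sigma_E by blast
    then have UC: "(\<Union>i. C i) \<in> sets M" by blast
    have "(LINT x:(\<Union>i. C i)|M. h x) = (\<Sum>i. LINT x:C i|M. h x)" if "integrable M h" for h :: "'a \<Rightarrow> real"
      using union(1) integrable_mult_indicator[OF UC that]
      by (intro lebesgue_integral_countable_add[OF C])
         (auto simp: disjoint_family_on_def set_integrable_def)
    then show ?case using union(3) f g by simp
  qed
qed

lemma space_gen [simp]: "space (gen M S) = space M"
  unfolding gen_def by (simp add: space_measure_of_conv)

lemma sets_gen: "S \<subseteq> sets M \<Longrightarrow> sets (gen M S) = sigma_sets (space M) S"
  unfolding gen_def using sets.sets_into_space by (subst sets_measure_of) blast+

lemma subalgebra_gen: "S \<subseteq> sets M \<Longrightarrow> subalgebra M (gen M S)"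
  unfolding subalgebra_def by (simp add: sets_gen sets.sigma_sets_subset)

lemma subalgebra_gen_mono: "S \<subseteq> T \<Longrightarrow> T \<subseteq> sets M \<Longrightarrow> subalgebra (gen M T) (gen M S)"
  unfolding subalgebra_def by (simp add: sets_gen sigma_sets_mono')

lemma subalgebra_trans: "subalgebra M G1 \<Longrightarrow> subalgebra G1 G0 \<Longrightarrow> subalgebra M G0"
  unfolding subalgebra_def by auto

lemma ev_subset_sets: "V \<in> measurable M N \<Longrightarrow> ev M V N \<subseteq> sets M"
  unfolding ev_def by (auto intro: measurable_sets)

lemma measurable_gen:
  assumes "V \<in> measurable M N" "ev M V N \<subseteq> S" "S \<subseteq> sets M"
  shows "V \<in> measurable (gen M S) N"
proof (rule measurableI)
  show "V x \<in> space N" if "x \<in> space (gen M S)" for x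
    using assms(1) that by (auto simp: measurable_space)
  show "V -` B \<inter> space (gen M S) \<in> sets (gen M S)" if "B \<in> sets N" for B
    using assms(2,3) that by (auto simp: sets_gen ev_def)
qed

lemma sigma_sets_join_subset:
  "subalgebra M G \<Longrightarrow> S \<subseteq> sets M \<Longrightarrow> sigma_sets (space M) (S \<union> sets G) \<subseteq> sets M"
  by (rule sets.sigma_sets_subset) (auto simp: subalgebra_def)

lemma subalgebra_join: "subalgebra M G \<Longrightarrow> S \<subseteq> sets M \<Longrightarrow> subalgebra M (gen M (S \<union> sets G))"
  by (rule subalgebra_gen) (auto simp: subalgebra_def)

lemma subalgebra_join_right: "subalgebra M G \<Longrightarrow> S \<subseteq> sets M \<Longrightarrow> subalgebra (gen M (S \<union> sets G)) G"
  unfolding subalgebra_def by (auto simp: sets_gen)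

lemma measurable_join_ev: "V \<in> measurable M N \<Longrightarrow> subalgebra M G \<Longrightarrow> V \<in> measurable (gen M (ev M V N \<union> sets G)) N"
  by (rule measurable_gen) (auto dest: ev_subset_sets simp: subalgebra_def)

lemma Int_stable_Int_rects:
  assumes G: "subalgebra M G" and S: "S \<subseteq> sets M"
  shows "Int_stable (Int_rects M S G)"
proof -
  interpret S: sigma_algebra "space M" "sigma_sets (space M) S"
    using S sets.sets_into_space by (intro sigma_algebra_sigma_sets) blast
  interpret G: sigma_algebra "space M" "sets G"
    using G unfolding subalgebra_def by (metis sets.sigma_algebra_axioms)
  show ?thesis
    unfolding Int_stable_def Int_rects_def
  proof (safe intro!: CollectI)
    fix E1 B1 E2 B2
    assume "E1 \<in> sigma_sets (space M) S" "E2 \<in> sigma_sets (space M) S" "B1 \<in> sets G" "B2 \<in> sets G"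
    then show "\<exists>E B. E1 \<inter> B1 \<inter> (E2 \<inter> B2) = E \<inter> B \<and> E \<in> sigma_sets (space M) S \<and> B \<in> sets G"
      by (intro exI[of _ "E1 \<inter> E2"] exI[of _ "B1 \<inter> B2"]) auto
  qed
qed

lemma Int_rects_subset_sigma_sets:
  assumes G: "subalgebra M G" and S: "S \<subseteq> sets M"
  shows "Int_rects M S G \<subseteq> sigma_sets (space M) (S \<union> sets G)"
proof
  have "S \<union> sets G \<subseteq> Pow (space M)"
    using S G sets.sets_into_space unfolding subalgebra_def by blast
  then interpret SG: sigma_algebra "space M" "sigma_sets (space M) (S \<union> sets G)"
    by (rule sigma_algebra_sigma_sets)
  fix C assume "C \<in> Int_rects M S G"
  then obtain E B where C: "C = E \<inter> B" "E \<in> sigma_sets (space M) S" "B \<in> sets G"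
    unfolding Int_rects_def by blast
  have "E \<in> sigma_sets (space M) (S \<union> sets G)"
    using C(2) sigma_sets_mono'[of S "S \<union> sets G"] by blast
  then show "C \<in> sigma_sets (space M) (S \<union> sets G)"
    using C by (auto intro: SG.Int)
qed

lemma Int_rects_subset_sets: "subalgebra M G \<Longrightarrow> S \<subseteq> sets M \<Longrightarrow> Int_rects M S G \<subseteq> sets M"
  using Int_rects_subset_sigma_sets sigma_sets_join_subset by blast

lemma sigma_sets_Int_rects:
  assumes G: "subalgebra M G" and S: "S \<subseteq> sets M"
  shows "sigma_sets (space M) (Int_rects M S G) = sigma_sets (space M) (S \<union> sets G)"
proof (rule sigma_sets_eqI)
  have G_space: "space M \<in> sets G" "\<And>B. B \<in> sets G \<Longrightarrow> B \<subseteq> space M"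
    using G sets.top sets.sets_into_space unfolding subalgebra_def by metis+
  fix C assume C: "C \<in> S \<union> sets G"
  have "C \<in> Int_rects M S G"
  proof (cases "C \<in> S")
    case True
    then have "C = C \<inter> space M"
      using S sets.sets_into_space by blast
    then show ?thesis
      using True G_space(1) unfolding Int_rects_def by blast
  next
    case False
    then have "C \<in> sets G" using C by blast
    moreover from this have "C = space M \<inter> C" using G_space(2) by blast
    ultimately show ?thesis
      unfolding Int_rects_def by (blast intro: sigma_sets_top)
  qed
  then show "C \<in> sigma_sets (space M) (Int_rects M S G)" by blast
qed (use Int_rects_subset_sigma_sets[OF G S] in blast)

section \<open>Conditional independence\<close>

lemma integrable_indicator_event [simp, intro]: "D \<in> sets M \<Longrightarrow> integrable M (indicator D :: 'a \<Rightarrow> real)"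
  by (simp add: emeasure_eq_measure)

lemma set_integral_indicator_event:
  "D \<in> sets M \<Longrightarrow> C \<in> sets M \<Longrightarrow> (LINT x:D|M. indicator C x) = measure M (D \<inter> C)"
  using sets.sets_into_space[of D]
  by (simp add: set_lebesgue_integral_def indicator_inter_arith[symmetric] Int_absorb2 Int_assoc)

lemma borel_measurable_cprob [measurable]: "cprob M G D \<in> borel_measurable G"
  unfolding cprob_def by simp

lemma borel_measurable_cprob2 [measurable]: "cprob M G D \<in> borel_measurable M"
  unfolding cprob_def by simp

lemma integrable_cprob: "subalgebra M G \<Longrightarrow> D \<in> sets M \<Longrightarrow> integrable M (cprob M G D)"
  unfolding cprob_def
  using sigma_finite_subalgebra.real_cond_exp_int(1)[OF sigma_finite_subalgebra_of_subalgebra] by auto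

lemma cprob_nonneg_le_one:
  assumes G: "subalgebra M G" and D: "D \<in> sets M"
  shows "AE x in M. 0 \<le> cprob M G D x \<and> cprob M G D x \<le> 1"
proof -
  interpret sigma_finite_subalgebra M G
    using G by (rule sigma_finite_subalgebra_of_subalgebra)
  have "AE x in M. 0 \<le> real_cond_exp M G (indicator D) x"
    using D by (intro real_cond_exp_pos) auto
  moreover have "AE x in M. real_cond_exp M G (indicator D) x \<le> 1"
    using D by (intro real_cond_exp_le_c) auto
  ultimately show ?thesis
    unfolding cprob_def by auto
qed

lemma integral_cprob:
  assumes G: "subalgebra M G" and D: "D \<in> sets M"
  shows "(\<integral>x. cprob M G D x \<partial>M) = (\<integral>x. indicator D x \<partial>M)"
proof -
  interpret sigma_finite_subalgebra M G
    using G by (rule sigma_finite_subalgebra_of_subalgebra)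
  show ?thesis
    unfolding cprob_def using D by (simp add: real_cond_exp_int(2))
qed

lemma cprob_Int_subalgebra:
  assumes G: "subalgebra M G" and E: "E \<in> sets M" and B: "B \<in> sets G"
  shows "AE x in M. cprob M G (E \<inter> B) x = indicator B x * cprob M G E x"
proof -
  interpret sigma_finite_subalgebra M G
    using G by (rule sigma_finite_subalgebra_of_subalgebra)
  have [measurable]: "E \<in> sets M" "B \<in> sets G" "B \<in> sets M"
    using E B G by (auto simp: subalgebra_def)
  have "cprob M G (E \<inter> B) = real_cond_exp M G (\<lambda>x. indicator B x * indicator E x)"
    unfolding cprob_def
    by (intro arg_cong[where f="real_cond_exp M G"]) (simp add: fun_eq_iff indicator_inter_arith mult.commute)
  moreover have "AE x in M. real_cond_exp M G (\<lambda>x. indicator B x * indicator E x) x = indicator B x * cprob M G E x"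
    unfolding cprob_def by (rule real_cond_exp_mult) (auto simp: indicator_inter_arith[symmetric])
  ultimately show ?thesis
    by simp
qed

lemma set_integral_cprob_swap:
  assumes G: "subalgebra M G" and D: "D \<in> sets M" and C: "C \<in> sets M"
  shows "(LINT x:D|M. cprob M G C x) = (LINT x:C|M. cprob M G D x)"
proof -
  interpret sigma_finite_subalgebra M G
    using G by (rule sigma_finite_subalgebra_of_subalgebra)
  have "(LINT x:D|M. cprob M G C x) = (\<integral>x. cprob M G C x * indicator D x \<partial>M)"
    unfolding set_lebesgue_integral_def by (simp add: mult.commute)
  also have "\<dots> = (\<integral>x. cprob M G C x * cprob M G D x \<partial>M)"
    unfolding cprob_def[of M G D] using D integrable_mult_indicator[OF D integrable_cprob[OF G C]]
    by (intro real_cond_exp_intg(2)[symmetric]) (auto simp: mult.commute)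
  also have "\<dots> = (\<integral>x. cprob M G D x * indicator C x \<partial>M)"
    unfolding cprob_def[of M G C] using C integrable_mult_indicator[OF C integrable_cprob[OF G D]]
    by (subst mult.commute, intro real_cond_exp_intg(2)) (auto simp: mult.commute)
  also have "\<dots> = (LINT x:C|M. cprob M G D x)"
    unfolding set_lebesgue_integral_def by (simp add: mult.commute)
  finally show ?thesis .
qed

lemma cond_indep_sym:
  assumes "cond_indep M G S1 S2"
  shows "cond_indep M G S2 S1"
  unfolding cond_indep_def
proof (intro ballI)
  fix E2 E1 assume "E2 \<in> sigma_sets (space M) S2" "E1 \<in> sigma_sets (space M) S1"
  then have "AE x in M. cprob M G (E1 \<inter> E2) x = cprob M G E1 x * cprob M G E2 x"
    using assms unfolding cond_indep_def by blast
  then show "AE x in M. cprob M G (E2 \<inter> E1) x = cprob M G E2 x * cprob M G E1 x"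
    by (simp add: Int_commute mult.commute)
qed

lemma measure_Int_rects_cond_indep:
  assumes G: "subalgebra M G" and CI: "cond_indep M G S1 S2"
    and S1: "S1 \<subseteq> sets M" and S2: "S2 \<subseteq> sets M"
    and E1: "E1 \<in> sigma_sets (space M) S1" and E2: "E2 \<in> sigma_sets (space M) S2"
    and B1: "B1 \<in> sets G" and B2: "B2 \<in> sets G"
  shows "measure M (E1 \<inter> B1 \<inter> (E2 \<inter> B2)) = (LINT x:E1 \<inter> B1|M. cprob M G (E2 \<inter> B2) x)"
proof -
  interpret sigma_finite_subalgebra M G
    using G by (rule sigma_finite_subalgebra_of_subalgebra)
  have [measurable]: "E1 \<in> sets M" "E2 \<in> sets M"
    using sets.sigma_sets_subset[OF S1] sets.sigma_sets_subset[OF S2] E1 E2 by blast+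
  have [measurable]: "B1 \<in> sets G" "B2 \<in> sets G" "B1 \<in> sets M" "B2 \<in> sets M"
    using B1 B2 G by (auto simp: subalgebra_def)
  let ?p1 = "cprob M G E1" and ?p2 = "cprob M G E2" and ?B = "indicator (B1 \<inter> B2) :: 'a \<Rightarrow> real"
  have cprob_B2: "AE x in M. cprob M G (E2 \<inter> B2) x = indicator B2 x * ?p2 x"
    using G \<open>E2 \<in> sets M\<close> B2 by (rule cprob_Int_subalgebra)
  have "(LINT x:E1 \<inter> B1|M. cprob M G (E2 \<inter> B2) x) = (\<integral>x. (?B x * ?p2 x) * indicator E1 x \<partial>M)"
    unfolding set_lebesgue_integral_def
  proof (rule integral_cong_AE)
    show "AE x in M. indicator (E1 \<inter> B1) x *\<^sub>R cprob M G (E2 \<inter> B2) x = ?B x * ?p2 x * indicator E1 x"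
      using cprob_B2
      by eventually_elim (auto simp: indicator_def)
  qed measurable
  also have "\<dots> = (\<integral>x. (?B x * ?p2 x) * ?p1 x \<partial>M)"
    unfolding cprob_def[of M G E1]
  proof (rule real_cond_exp_intg(2)[symmetric])
    show "integrable M (\<lambda>x. ?B x * ?p2 x * indicator E1 x)"
    proof (rule Bochner_Integration.integrable_bound[OF integrable_cprob[OF G \<open>E2 \<in> sets M\<close>]])
      show "AE x in M. norm (?B x * ?p2 x * indicator E1 x) \<le> norm (?p2 x)"
        by (intro AE_I2) (auto simp: indicator_def)
    qed measurable
  qed measurable
  also have "\<dots> = (\<integral>x. ?B x * cprob M G (E1 \<inter> E2) x \<partial>M)"
  proof (intro integral_cong_AE)
    have "AE x in M. cprob M G (E1 \<inter> E2) x = ?p1 x * ?p2 x"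
      using CI E1 E2 unfolding cond_indep_def by blast
    then show "AE x in M. ?B x * ?p2 x * ?p1 x = ?B x * cprob M G (E1 \<inter> E2) x"
      by eventually_elim simp
  qed measurable
  also have "\<dots> = (\<integral>x. ?B x * indicator (E1 \<inter> E2) x \<partial>M)"
    unfolding cprob_def
  proof (rule real_cond_exp_intg(2))
    show "integrable M (\<lambda>x. ?B x * indicator (E1 \<inter> E2) x)"
      by (simp add: indicator_inter_arith[symmetric])
  qed measurable
  also have "\<dots> = measure M (E1 \<inter> B1 \<inter> (E2 \<inter> B2))"
  proof -
    have "(\<lambda>x. ?B x * indicator (E1 \<inter> E2) x) = indicator (E1 \<inter> B1 \<inter> (E2 \<inter> B2))"
      by (auto simp: indicator_def fun_eq_iff)
    moreover have "E1 \<inter> B1 \<inter> (E2 \<inter> B2) \<inter> space M = E1 \<inter> B1 \<inter> (E2 \<inter> B2)"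
      using sets.sets_into_space[OF \<open>E1 \<in> sets M\<close>] by blast
    ultimately show ?thesis by simp
  qed
  finally show ?thesis ..
qed

lemma set_integral_indicator_rects_cond_indep:
  assumes G: "subalgebra M G" and CI: "cond_indep M G S1 S2"
    and S1: "S1 \<subseteq> sets M" and S2: "S2 \<subseteq> sets M"
    and C: "C \<in> Int_rects M S2 G" and D: "D \<in> sigma_sets (space M) (S1 \<union> sets G)"
  shows "(LINT x:D|M. indicator C x) = (LINT x:D|M. cprob M G C x)"
proof (rule set_integral_eq_on_sigma_sets[OF Int_stable_Int_rects[OF G S1] Int_rects_subset_sets[OF G S1]])
  have CM: "C \<in> sets M"
    using C Int_rects_subset_sets[OF G S2] by blast
  then show "integrable M (indicator C :: 'a \<Rightarrow> real)" "integrable M (cprob M G C)"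
    "(\<integral>x. indicator C x \<partial>M) = (\<integral>x. cprob M G C x \<partial>M)"
    using integrable_cprob[OF G CM] integral_cprob[OF G CM] by auto
  show "D \<in> sigma_sets (space M) (Int_rects M S1 G)"
    using D sigma_sets_Int_rects[OF G S1] by simp
  fix D' assume D': "D' \<in> Int_rects M S1 G"
  then obtain E1 B1 where D'_eq: "D' = E1 \<inter> B1" "E1 \<in> sigma_sets (space M) S1" "B1 \<in> sets G"
    unfolding Int_rects_def by blast
  obtain E2 B2 where C_eq: "C = E2 \<inter> B2" "E2 \<in> sigma_sets (space M) S2" "B2 \<in> sets G"
    using C unfolding Int_rects_def by blast
  have "D' \<in> sets M"
    using D' Int_rects_subset_sets[OF G S1] by blast
  then have "(LINT x:D'|M. indicator C x) = measure M (D' \<inter> C)"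
    using CM by (rule set_integral_indicator_event)
  also have "\<dots> = (LINT x:D'|M. cprob M G C x)"
    unfolding D'_eq C_eq by (rule measure_Int_rects_cond_indep[OF G CI S1 S2 D'_eq(2) C_eq(2) D'_eq(3) C_eq(3)])
  finally show "(LINT x:D'|M. indicator C x) = (LINT x:D'|M. cprob M G C x)" .
qed

lemma set_integral_indicator_cond_indep:
  assumes G: "subalgebra M G" and CI: "cond_indep M G S1 S2"
    and S1: "S1 \<subseteq> sets M" and S2: "S2 \<subseteq> sets M"
    and D: "D \<in> sigma_sets (space M) (S1 \<union> sets G)" and C: "C \<in> sigma_sets (space M) (S2 \<union> sets G)"
  shows "(LINT x:C|M. indicator D x) = (LINT x:C|M. cprob M G D x)"
proof (rule set_integral_eq_on_sigma_sets[OF Int_stable_Int_rects[OF G S2] Int_rects_subset_sets[OF G S2]])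
  have DM: "D \<in> sets M"
    using D sigma_sets_join_subset[OF G S1] by blast
  then show "integrable M (indicator D :: 'a \<Rightarrow> real)" "integrable M (cprob M G D)"
    "(\<integral>x. indicator D x \<partial>M) = (\<integral>x. cprob M G D x \<partial>M)"
    using integrable_cprob[OF G DM] integral_cprob[OF G DM] by auto
  show "C \<in> sigma_sets (space M) (Int_rects M S2 G)"
    using C sigma_sets_Int_rects[OF G S2] by simp
  fix C' assume C': "C' \<in> Int_rects M S2 G"
  then have C'M: "C' \<in> sets M"
    using Int_rects_subset_sets[OF G S2] by blast
  have "(LINT x:C'|M. indicator D x) = measure M (C' \<inter> D)"
    by (rule set_integral_indicator_event[OF C'M DM])
  also have "\<dots> = (LINT x:D|M. indicator C' x)"
    by (simp add: set_integral_indicator_event[OF DM C'M] Int_commute)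
  also have "\<dots> = (LINT x:D|M. cprob M G C' x)"
    by (rule set_integral_indicator_rects_cond_indep[OF G CI S1 S2 C' D])
  also have "\<dots> = (LINT x:C'|M. cprob M G D x)"
    by (rule set_integral_cprob_swap[OF G DM C'M])
  finally show "(LINT x:C'|M. indicator D x) = (LINT x:C'|M. cprob M G D x)" .
qed

lemma cond_exp_indicator_cond_indep:
  assumes G: "subalgebra M G" and CI: "cond_indep M G S1 S2"
    and S1: "S1 \<subseteq> sets M" and S2: "S2 \<subseteq> sets M"
    and D: "D \<in> sigma_sets (space M) (S1 \<union> sets G)"
  shows "AE x in M. real_cond_exp M (gen M (S2 \<union> sets G)) (indicator D) x = cprob M G D x"
proof -
  interpret G2: sigma_finite_subalgebra M "gen M (S2 \<union> sets G)"
    using subalgebra_join[OF G S2] by (rule sigma_finite_subalgebra_of_subalgebra)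
  have DM: "D \<in> sets M"
    using D sigma_sets_join_subset[OF G S1] by blast
  have sets_G2: "sets (gen M (S2 \<union> sets G)) = sigma_sets (space M) (S2 \<union> sets G)"
    using G S2 by (intro sets_gen) (auto simp: subalgebra_def)
  show ?thesis
  proof (rule G2.real_cond_exp_charact)
    fix C assume "C \<in> sets (gen M (S2 \<union> sets G))"
    then show "(LINT x:C|M. indicator D x) = (LINT x:C|M. cprob M G D x)"
      unfolding sets_G2 by (rule set_integral_indicator_cond_indep[OF G CI S1 S2 D])
  next
    show "cprob M G D \<in> borel_measurable (gen M (S2 \<union> sets G))"
      by (rule measurable_from_subalg[OF subalgebra_join_right[OF G S2]]) simp
  qed (use DM integrable_cprob[OF G DM] in auto)
qed

lemma cond_exp_cond_indep:
  assumes G: "subalgebra M G" and CI: "cond_indep M G S1 S2"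
    and S1: "S1 \<subseteq> sets M" and S2: "S2 \<subseteq> sets M"
    and f: "integrable M f" and f_meas: "f \<in> borel_measurable (gen M (S1 \<union> sets G))"
  shows "AE x in M. real_cond_exp M (gen M (S2 \<union> sets G)) f x = real_cond_exp M G f x"
proof -
  interpret sigma_finite_subalgebra M G
    using G by (rule sigma_finite_subalgebra_of_subalgebra)
  interpret G1: sigma_finite_subalgebra M "gen M (S1 \<union> sets G)"
    using subalgebra_join[OF G S1] by (rule sigma_finite_subalgebra_of_subalgebra)
  interpret G2: sigma_finite_subalgebra M "gen M (S2 \<union> sets G)"
    using subalgebra_join[OF G S2] by (rule sigma_finite_subalgebra_of_subalgebra)
  have sets_G2: "sets (gen M (S2 \<union> sets G)) = sigma_sets (space M) (S2 \<union> sets G)"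
    using G S2 by (intro sets_gen) (auto simp: subalgebra_def)
  have [measurable]: "f \<in> borel_measurable M"
    using f by auto
  show ?thesis
  proof (rule G2.real_cond_exp_charact)
    show "real_cond_exp M G f \<in> borel_measurable (gen M (S2 \<union> sets G))"
      by (rule measurable_from_subalg[OF subalgebra_join_right[OF G S2]]) simp
    fix C assume "C \<in> sets (gen M (S2 \<union> sets G))"
    then have C: "C \<in> sigma_sets (space M) (S2 \<union> sets G)"
      unfolding sets_G2 .
    then have [measurable]: "C \<in> sets M"
      using sigma_sets_join_subset[OF G S2] by blast
    have swap: "AE x in M. real_cond_exp M (gen M (S1 \<union> sets G)) (indicator C) x = cprob M G C x"
      by (rule cond_exp_indicator_cond_indep[OF G cond_indep_sym[OF CI] S2 S1 C])
    have "(LINT x:C|M. f x) = (\<integral>x. f x * indicator C x \<partial>M)"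
      unfolding set_lebesgue_integral_def by (simp add: mult.commute)
    also have "\<dots> = (\<integral>x. f x * real_cond_exp M (gen M (S1 \<union> sets G)) (indicator C) x \<partial>M)"
      using integrable_mult_indicator[OF \<open>C \<in> sets M\<close> f] f_meas
      by (intro G1.real_cond_exp_intg(2)[symmetric]) (auto simp: mult.commute)
    also have "\<dots> = (\<integral>x. cprob M G C x * f x \<partial>M)"
      using swap by (intro integral_cong_AE) (auto simp: mult.commute)
    also have "\<dots> = (\<integral>x. cprob M G C x * real_cond_exp M G f x \<partial>M)"
    proof (rule real_cond_exp_intg(2)[symmetric])
      show "integrable M (\<lambda>x. cprob M G C x * f x)"
      proof (rule Bochner_Integration.integrable_bound[OF f])
        show "AE x in M. norm (cprob M G C x * f x) \<le> norm (f x)"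
          using cprob_nonneg_le_one[OF G \<open>C \<in> sets M\<close>]
          by eventually_elim (auto simp: abs_mult intro!: mult_left_le_one_le)
      qed measurable
    qed auto
    also have "\<dots> = (\<integral>x. real_cond_exp M G f x * indicator C x \<partial>M)"
      unfolding cprob_def mult.commute[of "real_cond_exp M G (indicator C) _"]
      using integrable_mult_indicator[OF \<open>C \<in> sets M\<close> real_cond_exp_int(1)[OF f]]
      by (intro real_cond_exp_intg(2)) (auto simp: mult.commute)
    also have "\<dots> = (LINT x:C|M. real_cond_exp M G f x)"
      unfolding set_lebesgue_integral_def by (simp add: mult.commute)
    finally show "(LINT x:C|M. f x) = (LINT x:C|M. real_cond_exp M G f x)" .
  qed (use f real_cond_exp_int(1)[OF f] in auto)
qed

lemma integral_mult_cond_exp_cond_indep: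
  assumes G: "subalgebra M G" and CI: "cond_indep M G S1 S2"
    and S1: "S1 \<subseteq> sets M" and S2: "S2 \<subseteq> sets M"
    and f: "integrable M f" "f \<in> borel_measurable (gen M (S1 \<union> sets G))"
    and h: "h \<in> borel_measurable (gen M (S2 \<union> sets G))" and hf: "integrable M (\<lambda>x. h x * f x)"
  shows "(\<integral>x. h x * f x \<partial>M) = (\<integral>x. h x * real_cond_exp M G f x \<partial>M)"
proof -
  interpret G2: sigma_finite_subalgebra M "gen M (S2 \<union> sets G)"
    using subalgebra_join[OF G S2] by (rule sigma_finite_subalgebra_of_subalgebra)
  have [measurable]: "f \<in> borel_measurable M" "h \<in> borel_measurable M"
    using f(1) measurable_from_subalg[OF subalgebra_join[OF G S2] h] by auto
  have "(\<integral>x. h x * f x \<partial>M) = (\<integral>x. h x * real_cond_exp M (gen M (S2 \<union> sets G)) f x \<partial>M)"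
    using hf h by (intro G2.real_cond_exp_intg(2)[symmetric]) auto
  also have "\<dots> = (\<integral>x. h x * real_cond_exp M G f x \<partial>M)"
    using cond_exp_cond_indep[OF G CI S1 S2 f]
    by (intro integral_cong_AE) (auto intro: borel_measurable_cond_exp2)
  finally show ?thesis .
qed

lemma cond_exp_cond_indep_subalgebra:
  assumes G: "subalgebra M G" and CI: "cond_indep M G S1 S2"
    and S1: "S1 \<subseteq> sets M" and S2: "S2 \<subseteq> sets M"
    and f: "integrable M f" "f \<in> borel_measurable (gen M (S1 \<union> sets G))"
    and H: "subalgebra M H" "sets H \<subseteq> sets (gen M (S2 \<union> sets G))"
  shows "AE x in M. real_cond_exp M H f x = real_cond_exp M H (real_cond_exp M G f) x"
proof -
  interpret H: sigma_finite_subalgebra M H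
    using H(1) by (rule sigma_finite_subalgebra_of_subalgebra)
  have "subalgebra (gen M (S2 \<union> sets G)) H"
    using H unfolding subalgebra_def by simp
  then have "AE x in M. real_cond_exp M H (real_cond_exp M (gen M (S2 \<union> sets G)) f) x = real_cond_exp M H f x"
    using subalgebra_join[OF G S2] f(1) by (intro H.real_cond_exp_nested_subalg)
  moreover have "AE x in M. real_cond_exp M H (real_cond_exp M (gen M (S2 \<union> sets G)) f) x
      = real_cond_exp M H (real_cond_exp M G f) x"
    using cond_exp_cond_indep[OF G CI S1 S2 f] by (intro H.real_cond_exp_cong) auto
  ultimately show ?thesis
    by eventually_elim simp
qed

section \<open>Inverse propensity weighting\<close>

lemma cond_exp_inverse_propensity:
  assumes G: "subalgebra M G" and E: "E \<in> sets M"
    and pos: "AE x in M. 0 < cprob M G E x"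
    and int: "integrable M (\<lambda>x. indicator E x / cprob M G E x)"
  shows "AE x in M. real_cond_exp M G (\<lambda>x. indicator E x / cprob M G E x) x = 1"
proof -
  interpret sigma_finite_subalgebra M G
    using G by (rule sigma_finite_subalgebra_of_subalgebra)
  have "AE x in M. real_cond_exp M G (\<lambda>x. 1 / cprob M G E x * indicator E x) x
      = 1 / cprob M G E x * real_cond_exp M G (indicator E) x"
    using int E by (intro real_cond_exp_mult) auto
  with pos show ?thesis
    unfolding cprob_def by eventually_elim simp
qed

lemma
  assumes G1: "subalgebra M G1" and G0: "subalgebra G1 G0"
    and E: "E \<in> sets G1" and Q: "integrable M Q"
    and pos: "AE x in M. 0 < cprob M G0 E x"
    and bridge: "AE x in M. x \<in> E \<longrightarrow> real_cond_exp M G1 Q x = 1 / cprob M G0 E x"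
  shows integrable_inverse_propensity: "integrable M (\<lambda>x. indicator E x / cprob M G0 E x)"
    and cond_exp_indicator_mult_bridge: "AE x in M. real_cond_exp M G0 (\<lambda>x. indicator E x * Q x) x = 1"
proof -
  interpret G1: sigma_finite_subalgebra M G1
    using G1 by (rule sigma_finite_subalgebra_of_subalgebra)
  have subG0: "subalgebra M G0"
    using G1 G0 by (rule subalgebra_trans)
  interpret G0: sigma_finite_subalgebra M G0
    using subG0 by (rule sigma_finite_subalgebra_of_subalgebra)
  have [measurable]: "E \<in> sets G1" "E \<in> sets M" "Q \<in> borel_measurable M"
    using E G1 Q by (auto simp: subalgebra_def)
  have IQ: "integrable M (\<lambda>x. indicator E x * Q x)"
    using integrable_mult_indicator[OF \<open>E \<in> sets M\<close> Q] by simp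
  have "AE x in M. real_cond_exp M G1 (\<lambda>x. indicator E x * Q x) x = indicator E x * real_cond_exp M G1 Q x"
    using IQ by (intro G1.real_cond_exp_mult) auto
  with bridge have weight: "AE x in M. real_cond_exp M G1 (\<lambda>x. indicator E x * Q x) x = indicator E x / cprob M G0 E x"
    by eventually_elim (auto simp: indicator_def)
  show int: "integrable M (\<lambda>x. indicator E x / cprob M G0 E x)"
    by (rule integrable_cong_AE_imp[OF G1.real_cond_exp_int(1)[OF IQ] _ weight]) measurable
  have "AE x in M. real_cond_exp M G0 (real_cond_exp M G1 (\<lambda>x. indicator E x * Q x)) x
      = real_cond_exp M G0 (\<lambda>x. indicator E x * Q x) x"
    by (rule G0.real_cond_exp_nested_subalg[OF G1 G0 IQ])
  moreover have "AE x in M. real_cond_exp M G0 (real_cond_exp M G1 (\<lambda>x. indicator E x * Q x)) x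
      = real_cond_exp M G0 (\<lambda>x. indicator E x / cprob M G0 E x) x"
    using weight by (intro G0.real_cond_exp_cong) auto
  moreover have "AE x in M. real_cond_exp M G0 (\<lambda>x. indicator E x / cprob M G0 E x) x = 1"
    using subG0 \<open>E \<in> sets M\<close> pos int by (rule cond_exp_inverse_propensity)
  ultimately show "AE x in M. real_cond_exp M G0 (\<lambda>x. indicator E x * Q x) x = 1"
    by eventually_elim simp
qed

lemma square_integrable_inverse_propensity:
  assumes G: "subalgebra M G" and Q: "Q \<in> borel_measurable M" "integrable M (\<lambda>x. (Q x)\<^sup>2)"
    and [measurable]: "E \<in> sets M" "p \<in> borel_measurable M"
    and bridge: "AE x in M. x \<in> E \<longrightarrow> real_cond_exp M G Q x = 1 / p x"
  shows "integrable M (\<lambda>x. (indicator E x / p x)\<^sup>2)"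
proof (rule Bochner_Integration.integrable_bound)
  show "integrable M (\<lambda>x. (real_cond_exp M G Q x)\<^sup>2)"
    using G Q by (rule square_integrable_cond_exp)
  show "AE x in M. norm ((indicator E x / p x)\<^sup>2) \<le> norm ((real_cond_exp M G Q x)\<^sup>2)"
    using bridge by eventually_elim (auto simp: indicator_def)
qed measurable

lemma integral_inverse_propensity_weighted:
  fixes A Ya :: "'a \<Rightarrow> real" and a :: real
  defines "E \<equiv> {x \<in> space M. A x = a}"
  assumes G0: "subalgebra M G0" and A: "A \<in> borel_measurable M"
    and Ya: "Ya \<in> borel_measurable M" "integrable M (\<lambda>x. (Ya x)\<^sup>2)"
    and CI: "cond_indep M G0 (ev M A borel) (ev M Ya borel)"
    and pos: "AE x in M. 0 < cprob M G0 E x"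
    and w_square: "integrable M (\<lambda>x. (indicator E x / cprob M G0 E x)\<^sup>2)"
  shows "(\<integral>x. Ya x * (indicator E x / cprob M G0 E x) \<partial>M) = (\<integral>x. Ya x \<partial>M)"
proof -
  let ?w = "\<lambda>x. indicator E x / cprob M G0 E x"
  have [measurable]: "Ya \<in> borel_measurable M"
    by (fact Ya(1))
  have ev_A: "ev M A borel \<subseteq> sets M" and ev_Ya: "ev M Ya borel \<subseteq> sets M"
    using A Ya(1) by (simp_all add: ev_subset_sets)
  have "E \<in> sets (gen M (ev M A borel \<union> sets G0))"
    unfolding E_def by (rule level_set_in_sets[OF measurable_join_ev[OF A G0]]) simp
  moreover have "cprob M G0 E \<in> borel_measurable (gen M (ev M A borel \<union> sets G0))"
    by (rule measurable_from_subalg[OF subalgebra_join_right[OF G0 ev_A]]) simp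
  ultimately have w_meas: "?w \<in> borel_measurable (gen M (ev M A borel \<union> sets G0))"
    by measurable
  have w_M [measurable]: "?w \<in> borel_measurable M"
    using measurable_from_subalg[OF subalgebra_join[OF G0 ev_A] w_meas] .
  have w_int: "integrable M ?w"
    by (rule square_integrable_imp_integrable[OF w_M w_square])
  have "(\<integral>x. Ya x * ?w x \<partial>M) = (\<integral>x. Ya x * real_cond_exp M G0 ?w x \<partial>M)"
  proof (rule integral_mult_cond_exp_cond_indep[OF G0 CI ev_A ev_Ya w_int w_meas])
    show "Ya \<in> borel_measurable (gen M (ev M Ya borel \<union> sets G0))"
      using Ya(1) G0 by (rule measurable_join_ev)
    show "integrable M (\<lambda>x. Ya x * ?w x)"
      by (rule integrable_mult_of_square_integrable[OF Ya(1) w_M Ya(2) w_square])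
  qed
  also have "\<dots> = (\<integral>x. Ya x \<partial>M)"
  proof (rule integral_cong_AE)
    have "E \<in> sets M"
      unfolding E_def by (rule level_set_in_sets[OF A refl])
    from cond_exp_inverse_propensity[OF G0 this pos w_int]
    show "AE x in M. Ya x * real_cond_exp M G0 ?w x = Ya x"
      by eventually_elim simp
  qed measurable
  finally show ?thesis .
qed

lemma integral_outcome_bridge:
  fixes A Y Ya Q :: "'a \<Rightarrow> real" and a :: real
  defines "E \<equiv> {x \<in> space M. A x = a}"
  assumes G1: "subalgebra M G1" "subalgebra G1 G0" and A: "A \<in> borel_measurable G1"
    and SZ: "SZ \<subseteq> sets M"
    and Q: "Q \<in> borel_measurable (gen M (SZ \<union> sets G1))" "integrable M (\<lambda>x. (Q x)\<^sup>2)"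
    and Y: "Y \<in> borel_measurable M" "integrable M (\<lambda>x. (Y x)\<^sup>2)"
    and Ya: "Ya \<in> borel_measurable M" "integrable M (\<lambda>x. (Ya x)\<^sup>2)"
    and CI_Y: "cond_indep M G1 SZ (ev M Y borel)"
    and CI_A: "cond_indep M G0 (ev M A borel) (ev M Ya borel)"
    and consistent: "AE x in M. A x = a \<longrightarrow> Y x = Ya x"
    and pos: "AE x in M. 0 < cprob M G0 E x"
    and bridge: "AE x in M. x \<in> E \<longrightarrow> real_cond_exp M G1 Q x = 1 / cprob M G0 E x"
  shows "(\<integral>x. indicator E x * Y x * Q x \<partial>M) = (\<integral>x. Ya x \<partial>M)"
proof -
  have A_M [measurable]: "A \<in> borel_measurable M"
    using measurable_from_subalg[OF G1(1) A] .
  have Q_M [measurable]: "Q \<in> borel_measurable M"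
    using measurable_from_subalg[OF subalgebra_join[OF G1(1) SZ] Q(1)] .
  have [measurable]: "Y \<in> borel_measurable M" "Ya \<in> borel_measurable M"
    using Y Ya by auto
  have E_G1: "E \<in> sets G1"
    unfolding E_def using G1(1) by (intro level_set_in_sets[OF A]) (simp add: subalgebra_def)
  then have [measurable]: "E \<in> sets M"
    using G1(1) by (auto simp: subalgebra_def)
  have Q_int: "integrable M Q"
    by (rule square_integrable_imp_integrable[OF _ Q(2)]) measurable
  let ?r = "real_cond_exp M G1 Q"
  have "(\<integral>x. indicator E x * Y x * Q x \<partial>M) = (\<integral>x. (indicator E x * Y x) * ?r x \<partial>M)"
  proof (rule integral_mult_cond_exp_cond_indep[OF G1(1) CI_Y SZ ev_subset_sets[OF Y(1)] Q_int Q(1)])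
    have "E \<in> sets (gen M (ev M Y borel \<union> sets G1))"
      using E_G1 ev_subset_sets[OF Y(1)] G1(1) by (auto simp: subalgebra_def sets_gen)
    with measurable_join_ev[OF Y(1) G1(1)]
    show "(\<lambda>x. indicator E x * Y x) \<in> borel_measurable (gen M (ev M Y borel \<union> sets G1))"
      by measurable
    have "integrable M (\<lambda>x. (indicator E x * Y x)\<^sup>2)"
      using Y(2) by (rule Bochner_Integration.integrable_bound) (auto simp: indicator_def)
    then show "integrable M (\<lambda>x. indicator E x * Y x * Q x)"
      using Q(2) by (intro integrable_mult_of_square_integrable) auto
  qed
  also have "\<dots> = (\<integral>x. Ya x * (indicator E x / cprob M G0 E x) \<partial>M)"
  proof (rule integral_cong_AE)
    show "AE x in M. indicator E x * Y x * ?r x = Ya x * (indicator E x / cprob M G0 E x)"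
      using bridge consistent by eventually_elim (simp add: E_def indicator_def)
  qed measurable
  also have "\<dots> = (\<integral>x. Ya x \<partial>M)"
    unfolding E_def
  proof (rule integral_inverse_propensity_weighted[OF subalgebra_trans[OF G1] A_M Ya CI_A])
    show "AE x in M. 0 < cprob M G0 {x \<in> space M. A x = a} x"
      using pos unfolding E_def .
    show "integrable M (\<lambda>x. (indicator {x \<in> space M. A x = a} x / cprob M G0 {x \<in> space M. A x = a} x)\<^sup>2)"
      using square_integrable_inverse_propensity[OF G1(1) Q_M Q(2) \<open>E \<in> sets M\<close> borel_measurable_cprob2 bridge]
      unfolding E_def .
  qed
  finally show ?thesis .
qed

lemma cond_exp_indicator_mult_bridge_cond_indep:
  fixes A Q :: "'a \<Rightarrow> real" and a :: real
  defines "E \<equiv> {x \<in> space M. A x = a}"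
  assumes G1: "subalgebra M G1" "subalgebra G1 G0" and A: "A \<in> borel_measurable G1"
    and SZ: "SZ \<subseteq> sets M" and SW: "SW \<subseteq> sets M"
    and Q: "Q \<in> borel_measurable (gen M (SZ \<union> ev M A borel \<union> sets G0))" "integrable M Q"
    and CI_W: "cond_indep M G0 (SZ \<union> ev M A borel) SW"
    and H: "subalgebra M H" "sets H \<subseteq> sets (gen M (SW \<union> sets G0))"
    and pos: "AE x in M. 0 < cprob M G0 E x"
    and bridge: "AE x in M. x \<in> E \<longrightarrow> real_cond_exp M G1 Q x = 1 / cprob M G0 E x"
  shows "AE x in M. real_cond_exp M H (\<lambda>x. indicator E x * Q x) x = 1"
proof -
  have G0: "subalgebra M G0"
    using G1 by (rule subalgebra_trans)
  interpret H: sigma_finite_subalgebra M H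
    using H(1) by (rule sigma_finite_subalgebra_of_subalgebra)
  have ev_A: "ev M A borel \<subseteq> sets M"
    using measurable_from_subalg[OF G1(1) A] by (rule ev_subset_sets)
  have SZA: "SZ \<union> ev M A borel \<subseteq> sets M"
    using SZ ev_A by blast
  have E_G1: "E \<in> sets G1"
    unfolding E_def using G1(1) by (intro level_set_in_sets[OF A]) (simp add: subalgebra_def)
  have "A \<in> borel_measurable (gen M (SZ \<union> ev M A borel \<union> sets G0))"
    using SZA G0 measurable_from_subalg[OF G1(1) A]
    by (intro measurable_gen) (auto simp: subalgebra_def)
  then have "E \<in> sets (gen M (SZ \<union> ev M A borel \<union> sets G0))"
    unfolding E_def by (rule level_set_in_sets) simp
  then have IQ: "(\<lambda>x. indicator E x * Q x) \<in> borel_measurable (gen M (SZ \<union> ev M A borel \<union> sets G0))"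
    using Q(1) by measurable
  have E_M: "E \<in> sets M"
    using E_G1 G1(1) by (auto simp: subalgebra_def)
  have IQ_int: "integrable M (\<lambda>x. indicator E x * Q x)"
    using integrable_mult_indicator[OF E_M Q(2)] by simp
  have "AE x in M. real_cond_exp M H (\<lambda>x. indicator E x * Q x) x
      = real_cond_exp M H (real_cond_exp M G0 (\<lambda>x. indicator E x * Q x)) x"
    using G0 CI_W SZA SW IQ_int IQ H by (rule cond_exp_cond_indep_subalgebra)
  moreover have "AE x in M. real_cond_exp M H (real_cond_exp M G0 (\<lambda>x. indicator E x * Q x)) x
      = real_cond_exp M H (\<lambda>_. 1) x"
    using cond_exp_indicator_mult_bridge[OF G1 E_G1 Q(2) pos bridge]
    by (intro H.real_cond_exp_cong) auto
  moreover have "AE x in M. real_cond_exp M H (\<lambda>_. 1) x = 1"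
    by (rule H.real_cond_exp_F_meas) auto
  ultimately show ?thesis
    by eventually_elim simp
qed

section \<open>Conditioning on a level set\<close>

lemma integral_indicator_mult_cprob:
  assumes H: "subalgebra M H" and E: "E \<in> sets M" and B: "B \<in> sets H" and f: "integrable M f"
  shows "(\<integral>x. indicator B x * (indicator E x * cprob M H E x * f x) \<partial>M)
    = (\<integral>x. indicator B x * (indicator E x * real_cond_exp M H (\<lambda>x. indicator E x * f x) x) \<partial>M)"
proof -
  interpret sigma_finite_subalgebra M H
    using H by (rule sigma_finite_subalgebra_of_subalgebra)
  let ?p = "cprob M H E" and ?g = "real_cond_exp M H (\<lambda>x. indicator E x * f x)"
  have [measurable]: "B \<in> sets H" "B \<in> sets M" "E \<in> sets M" "f \<in> borel_measurable M"
    using B H E f by (auto simp: subalgebra_def)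
  have If: "integrable M (\<lambda>x. indicator E x * f x)"
    using integrable_mult_indicator[OF E f] by simp
  have g: "integrable M ?g"
    using If by (rule real_cond_exp_int(1))
  have "(\<integral>x. indicator B x * (indicator E x * ?p x * f x) \<partial>M)
      = (\<integral>x. (indicator B x * ?p x) * (indicator E x * f x) \<partial>M)"
    by (simp add: ac_simps)
  also have "\<dots> = (\<integral>x. (indicator B x * ?p x) * ?g x \<partial>M)"
  proof (rule real_cond_exp_intg(2)[symmetric])
    show "integrable M (\<lambda>x. indicator B x * ?p x * (indicator E x * f x))"
    proof (rule Bochner_Integration.integrable_bound[OF f])
      show "AE x in M. norm (indicator B x * ?p x * (indicator E x * f x)) \<le> norm (f x)"
        using cprob_nonneg_le_one[OF H E]
        by eventually_elim (auto simp: indicator_def abs_mult intro!: mult_left_le_one_le)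
    qed measurable
  qed measurable
  also have "\<dots> = (\<integral>x. (indicator B x * ?g x) * ?p x \<partial>M)"
    by (simp add: ac_simps)
  also have "\<dots> = (\<integral>x. (indicator B x * ?g x) * indicator E x \<partial>M)"
    unfolding cprob_def
  proof (rule real_cond_exp_intg(2))
    show "integrable M (\<lambda>x. indicator B x * ?g x * indicator E x)"
    proof (rule Bochner_Integration.integrable_bound[OF g])
      show "AE x in M. norm (indicator B x * ?g x * indicator E x) \<le> norm (?g x)"
        by (intro AE_I2) (auto simp: indicator_def)
    qed measurable
  qed measurable
  also have "\<dots> = (\<integral>x. indicator B x * (indicator E x * ?g x) \<partial>M)"
    by (simp add: ac_simps)
  finally show ?thesis .
qed

lemma integrable_indicator_cprob_mult:
  assumes H: "subalgebra M H" and E: "E \<in> sets M" and f: "integrable M f"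
  shows "integrable M (\<lambda>x. indicator E x * cprob M H E x * f x)"
proof (rule Bochner_Integration.integrable_bound[OF f])
  show "AE x in M. norm (indicator E x * cprob M H E x * f x) \<le> norm (f x)"
    using cprob_nonneg_le_one[OF H E]
    by eventually_elim (auto simp: indicator_def abs_mult intro!: mult_left_le_one_le)
qed (intro borel_measurable_times borel_measurable_indicator E borel_measurable_cprob2
    borel_measurable_integrable[OF f])

lemma set_integral_level_set_Int:
  fixes A f :: "'a \<Rightarrow> real" and a :: real
  defines "E \<equiv> {x \<in> space M. A x = a}"
  assumes H: "subalgebra M H" and A: "A \<in> borel_measurable M" and f: "integrable M f"
    and D: "D \<in> sigma_sets (space M) (ev M A borel)" and B: "B \<in> sets H"
  shows "(LINT x:D \<inter> B|M. indicator E x * cprob M H E x * f x)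
    = (LINT x:D \<inter> B|M. indicator E x * real_cond_exp M H (\<lambda>x. indicator E x * f x) x)"
proof -
  let ?I = "indicator E :: 'a \<Rightarrow> real"
  have E_M: "E \<in> sets M"
    unfolding E_def by (rule level_set_in_sets[OF A refl])
  from level_set_subset_or_disjoint[OF D, of a]
  consider "E \<subseteq> D" | "E \<inter> D = {}"
    unfolding E_def by blast
  then show ?thesis
  proof cases
    case 1
    then have eq: "indicator (D \<inter> B) x * ?I x = indicator B x * ?I x" for x
      by (auto simp: indicator_def)
    have "(LINT x:D \<inter> B|M. ?I x * h x) = (\<integral>x. indicator B x * (?I x * h x) \<partial>M)" for h
      by (simp only: set_lebesgue_integral_def real_scaleR_def mult.assoc[symmetric] eq)
    then show ?thesis
      using integral_indicator_mult_cprob[OF H E_M B f] by (simp add: mult.assoc)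
  next
    case 2
    then have eq: "indicator (D \<inter> B) x * ?I x = 0" for x
      by (auto simp: indicator_def)
    have "(LINT x:D \<inter> B|M. ?I x * h x) = 0" for h
      by (simp add: set_lebesgue_integral_def mult.assoc[symmetric] eq)
    then show ?thesis
      by (simp add: mult.assoc)
  qed
qed

lemma set_integral_level_set_join:
  fixes A f :: "'a \<Rightarrow> real" and a :: real
  defines "E \<equiv> {x \<in> space M. A x = a}"
  assumes H: "subalgebra M H" and A: "A \<in> borel_measurable M" and f: "integrable M f"
    and C: "C \<in> sigma_sets (space M) (ev M A borel \<union> sets H)"
  shows "(LINT x:C|M. indicator E x * cprob M H E x * f x)
    = (LINT x:C|M. indicator E x * real_cond_exp M H (\<lambda>x. indicator E x * f x) x)"
proof -
  interpret H: sigma_finite_subalgebra M H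
    using H by (rule sigma_finite_subalgebra_of_subalgebra)
  have ev_A: "ev M A borel \<subseteq> sets M"
    using A by (rule ev_subset_sets)
  have E_M: "E \<in> sets M"
    unfolding E_def by (rule level_set_in_sets[OF A refl])
  let ?I = "indicator E :: 'a \<Rightarrow> real" and ?p = "cprob M H E"
  let ?g = "real_cond_exp M H (\<lambda>x. indicator E x * f x)"
  have int_Ig: "integrable M (\<lambda>x. ?I x * ?g x)"
    using integrable_mult_indicator[OF E_M H.real_cond_exp_int(1)] integrable_mult_indicator[OF E_M f]
    by simp
  show ?thesis
  proof (rule set_integral_eq_on_sigma_sets[OF Int_stable_Int_rects[OF H ev_A] Int_rects_subset_sets[OF H ev_A]
        integrable_indicator_cprob_mult[OF H E_M f] int_Ig])
    show "C \<in> sigma_sets (space M) (Int_rects M (ev M A borel) H)"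
      using C sigma_sets_Int_rects[OF H ev_A] by simp
    have "space M \<in> sets H"
      using H by (metis sets.top subalgebra_def)
    then show "(\<integral>x. ?I x * ?p x * f x \<partial>M) = (\<integral>x. ?I x * ?g x \<partial>M)"
      using integral_indicator_mult_cprob[OF H E_M _ f, of "space M"] E_M sets.sets_into_space
      by (simp add: indicator_def cong: Bochner_Integration.integral_cong)
  next
    fix D assume "D \<in> Int_rects M (ev M A borel) H"
    then obtain D' B where "D = D' \<inter> B" "D' \<in> sigma_sets (space M) (ev M A borel)" "B \<in> sets H"
      unfolding Int_rects_def by blast
    then show "(LINT x:D|M. ?I x * ?p x * f x) = (LINT x:D|M. ?I x * ?g x)"
      unfolding E_def using set_integral_level_set_Int[OF H A f] by simp
  qed
qed

lemma cond_exp_join_level_set: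
  fixes A f :: "'a \<Rightarrow> real" and a :: real
  defines "E \<equiv> {x \<in> space M. A x = a}"
  assumes H: "subalgebra M H"
    and F: "subalgebra M F" "sets F = sigma_sets (space M) (ev M A borel \<union> sets H)"
    and A: "A \<in> borel_measurable M" and f: "integrable M f"
  shows "AE x in M. x \<in> E \<longrightarrow>
    real_cond_exp M F f x * cprob M H E x = real_cond_exp M H (\<lambda>x. indicator E x * f x) x"
proof -
  interpret F: sigma_finite_subalgebra M F
    using F(1) by (rule sigma_finite_subalgebra_of_subalgebra)
  have HF: "subalgebra F H"
    using F H unfolding subalgebra_def by auto
  have "sets (gen M (ev M A borel \<union> sets H)) = sets F"
    using F(2) ev_subset_sets[OF A] H by (subst sets_gen) (auto simp: subalgebra_def)
  with measurable_join_ev[OF A H] have "A \<in> borel_measurable F"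
    using measurable_cong_sets by blast
  then have E_F [measurable]: "E \<in> sets F"
    unfolding E_def by (rule level_set_in_sets) (use F(1) in \<open>simp add: subalgebra_def\<close>)
  have E_M [measurable]: "E \<in> sets M"
    using E_F F(1) by (auto simp: subalgebra_def)
  have [measurable]: "f \<in> borel_measurable M"
    using f by auto
  let ?I = "indicator E :: 'a \<Rightarrow> real" and ?p = "cprob M H E"
  let ?g = "real_cond_exp M H (\<lambda>x. indicator E x * f x)"
  have p_F [measurable]: "?p \<in> borel_measurable F" and g_F [measurable]: "?g \<in> borel_measurable F"
    by (simp_all add: measurable_from_subalg[OF HF])
  have int_Ipf: "integrable M (\<lambda>x. ?I x * ?p x * f x)"
    using H E_M f by (rule integrable_indicator_cprob_mult)
  have "AE x in M. real_cond_exp M F (\<lambda>x. ?I x * ?p x * f x) x = ?I x * ?g x"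
  proof (rule F.real_cond_exp_charact)
    fix C assume "C \<in> sets F"
    then show "(LINT x:C|M. ?I x * ?p x * f x) = (LINT x:C|M. ?I x * ?g x)"
      unfolding F(2) E_def by (rule set_integral_level_set_join[OF H A f])
  next
    show "integrable M (\<lambda>x. ?I x * ?g x)"
      using integrable_mult_indicator[OF E_M sigma_finite_subalgebra.real_cond_exp_int(1)]
        sigma_finite_subalgebra_of_subalgebra[OF H] integrable_mult_indicator[OF E_M f]
      by simp
    show "(\<lambda>x. ?I x * ?g x) \<in> borel_measurable F"
      by (intro borel_measurable_times borel_measurable_indicator E_F g_F)
  qed (rule int_Ipf)
  moreover have "AE x in M. real_cond_exp M F (\<lambda>x. ?I x * ?p x * f x) x = ?I x * ?p x * real_cond_exp M F f x"
    using int_Ipf E_F by (intro F.real_cond_exp_mult) auto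
  ultimately show ?thesis
    by eventually_elim (auto simp: indicator_def mult_ac)
qed

end

section \<open>The proximal causal model\<close>

lemma signA_square [simp]: "signA a * signA a = 1"
  unfolding signA_def by simp

lemma signA_nonzero [simp]: "signA a \<noteq> 0"
  unfolding signA_def by simp

lemma borel_measurable_signA [measurable]: "signA \<in> borel_measurable borel"
proof -
  have "signA = (\<lambda>a. 2 * indicator {1} a - 1)"
    by (auto simp: signA_def fun_eq_iff)
  moreover have "(\<lambda>a. 2 * indicator {1 :: real} a - 1 :: real) \<in> borel_measurable borel"
    by measurable
  ultimately show ?thesis by simp
qed

lemma measurable_of_signed:
  assumes "(\<lambda>(z, a, x). signA a * q (z, a, x)) \<in> borel_measurable (N1 \<Otimes>\<^sub>M (borel \<Otimes>\<^sub>M N2))"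
  shows "q \<in> borel_measurable (N1 \<Otimes>\<^sub>M (borel \<Otimes>\<^sub>M N2))"
proof -
  have "q = (\<lambda>p. signA (fst (snd p)) * (\<lambda>(z, a, x). signA a * q (z, a, x)) p)"
    by (auto simp: fun_eq_iff mult.assoc[symmetric])
  also have "\<dots> \<in> borel_measurable (N1 \<Otimes>\<^sub>M (borel \<Otimes>\<^sub>M N2))"
    using assms by measurable
  finally show ?thesis .
qed

lemma measurable_Z_component:
  "Z \<in> measurable M (MZK MZ K) \<Longrightarrow> j \<in> {1..K} \<Longrightarrow> (\<lambda>\<omega>. Z \<omega> j) \<in> measurable M MZ"
  using measurable_compose[OF _ measurable_component_singleton[of j "{1..K}" "\<lambda>_. MZ"]] by simp

lemma Zev_subset_sets:
  assumes "Z \<in> measurable M (MZK MZ K)" "J \<subseteq> {1..K}"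
  shows "Zev M Z MZ J \<subseteq> sets M"
  using assms measurable_Z_component[OF assms(1)] unfolding Zev_def ev_def
  by (blast intro: measurable_sets)

lemma bridge_on_level_set:
  assumes "AE \<omega> in M. r \<omega> = 1 / propA M G A \<omega>"
  shows "AE \<omega> in M. \<omega> \<in> {x \<in> space M. A x = a} \<longrightarrow> r \<omega> = 1 / cprob M G {x \<in> space M. A x = a} \<omega>"
  using assms by eventually_elim (auto simp: propA_def)

lemma signed_in_HgamD:
  assumes "(\<lambda>(z, a, x). signA a * q (z, a, x)) \<in> Hgam M Z MZ K A X MX \<gamma>"
  shows "q \<in> borel_measurable (MZK MZ K \<Otimes>\<^sub>M (borel \<Otimes>\<^sub>M MX))"
    and "integrable M (\<lambda>\<omega>. (q (Z \<omega>, A \<omega>, X \<omega>))\<^sup>2)"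
proof -
  have signed: "(\<lambda>(z, a, x). signA a * q (z, a, x)) \<in> borel_measurable (MZK MZ K \<Otimes>\<^sub>M (borel \<Otimes>\<^sub>M MX))"
    and sq: "integrable M (\<lambda>\<omega>. (signA (A \<omega>) * q (Z \<omega>, A \<omega>, X \<omega>))\<^sup>2)"
    using assms unfolding Hgam_def L2fun_def by auto
  show "q \<in> borel_measurable (MZK MZ K \<Otimes>\<^sub>M (borel \<Otimes>\<^sub>M MX))"
    using signed by (rule measurable_of_signed)
  show "integrable M (\<lambda>\<omega>. (q (Z \<omega>, A \<omega>, X \<omega>))\<^sup>2)"
    using sq by (simp add: power_mult_distrib power2_eq_square[of "signA _"])
qed

context prob_space
begin

lemma measurable_Z_gen:
  assumes Z: "Z \<in> measurable M (MZK MZ K)" and S: "Zev M Z MZ {1..K} \<subseteq> S" "S \<subseteq> sets M"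
  shows "Z \<in> measurable (gen M S) (MZK MZ K)"
proof -
  have "(\<lambda>\<omega> j. Z \<omega> j) \<in> measurable (gen M S) (MZK MZ K)"
  proof (rule measurable_PiM_single')
    fix j assume j: "j \<in> {1..K}"
    have "ev M (\<lambda>\<omega>. Z \<omega> j) MZ \<subseteq> S"
      using S(1) j unfolding Zev_def by blast
    then show "(\<lambda>\<omega>. Z \<omega> j) \<in> measurable (gen M S) MZ"
      by (rule measurable_gen[OF measurable_Z_component[OF Z j] _ S(2)])
  next
    show "(\<lambda>\<omega>. Z \<omega>) \<in> space (gen M S) \<rightarrow> (\<Pi>\<^sub>E i\<in>{1..K}. space MZ)"
      using measurable_space[OF Z] by (auto simp: space_PiM)
  qed
  then show ?thesis by simp
qed

lemma Hgam_diff: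
  assumes Z: "Z \<in> measurable M (MZK MZ K)" and A: "A \<in> borel_measurable M" and X: "X \<in> measurable M MX"
    and d1: "d1 \<in> Hgam M Z MZ K A X MX \<gamma>" and d2: "d2 \<in> Hgam M Z MZ K A X MX \<gamma>"
  shows "(\<lambda>p. d1 p - d2 p) \<in> Hgam M Z MZ K A X MX \<gamma>"
proof -
  let ?N = "MZK MZ K \<Otimes>\<^sub>M (borel \<Otimes>\<^sub>M MX)"
  have [measurable]: "(\<lambda>\<omega>. (Z \<omega>, A \<omega>, X \<omega>)) \<in> measurable M ?N"
    using Z A X by measurable
  have [measurable]: "d1 \<in> borel_measurable ?N" "d2 \<in> borel_measurable ?N"
    and sq1: "integrable M (\<lambda>\<omega>. (d1 (Z \<omega>, A \<omega>, X \<omega>))\<^sup>2)"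
    and sq2: "integrable M (\<lambda>\<omega>. (d2 (Z \<omega>, A \<omega>, X \<omega>))\<^sup>2)"
    using d1 d2 unfolding Hgam_def L2fun_def by auto
  have int1: "integrable M (\<lambda>\<omega>. d1 (Z \<omega>, A \<omega>, X \<omega>))"
    by (rule square_integrable_imp_integrable[OF _ sq1]) measurable
  have int2: "integrable M (\<lambda>\<omega>. d2 (Z \<omega>, A \<omega>, X \<omega>))"
    by (rule square_integrable_imp_integrable[OF _ sq2]) measurable
  have "integrable M (\<lambda>\<omega>. (d1 (Z \<omega>, A \<omega>, X \<omega>) - d2 (Z \<omega>, A \<omega>, X \<omega>))\<^sup>2)"
    by (rule square_integrable_diff[OF _ _ sq1 sq2]; measurable)
  moreover have "AE \<omega> in M. real_cond_exp M (gen M (Zev M Z MZ ({1..K} - \<nu>) \<union> ev M X MX))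
      (\<lambda>\<omega>. d1 (Z \<omega>, A \<omega>, X \<omega>) - d2 (Z \<omega>, A \<omega>, X \<omega>)) \<omega> = 0"
    if \<nu>: "\<nu> \<subseteq> {1..K} \<and> card \<nu> = \<gamma>" for \<nu>
  proof -
    let ?F = "gen M (Zev M Z MZ ({1..K} - \<nu>) \<union> ev M X MX)"
    interpret sigma_finite_subalgebra M ?F
      using Zev_subset_sets[OF Z, of "{1..K} - \<nu>"] ev_subset_sets[OF X]
      by (intro sigma_finite_subalgebra_of_subalgebra subalgebra_gen) auto
    have "AE \<omega> in M. real_cond_exp M ?F (\<lambda>\<omega>. d1 (Z \<omega>, A \<omega>, X \<omega>)) \<omega> = 0"
      "AE \<omega> in M. real_cond_exp M ?F (\<lambda>\<omega>. d2 (Z \<omega>, A \<omega>, X \<omega>)) \<omega> = 0"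
      using d1 d2 \<nu> unfolding Hgam_def by blast+
    with real_cond_exp_diff[OF int1 int2] show ?thesis
      by eventually_elim simp
  qed
  moreover have "(\<lambda>p. d1 p - d2 p) \<in> borel_measurable ?N"
    by measurable
  ultimately show ?thesis
    unfolding Hgam_def L2fun_def by auto
qed

end

locale proxy_model = prob_space M
  for M :: "'w measure"
    and Y Y0 Y1 A :: "'w \<Rightarrow> real"
    and Z :: "'w \<Rightarrow> nat \<Rightarrow> 'z" and MZ :: "'z measure"
    and W :: "'w \<Rightarrow> 'c" and MW :: "'c measure"
    and X :: "'w \<Rightarrow> 'x" and MX :: "'x measure"
    and U :: "'w \<Rightarrow> 'u" and MU :: "'u measure"
    and K :: nat and \<nu> :: "nat set" +
  assumes Y_measurable [measurable]: "Y \<in> borel_measurable M"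
    and Y0_measurable [measurable]: "Y0 \<in> borel_measurable M"
    and Y1_measurable [measurable]: "Y1 \<in> borel_measurable M"
    and Y0_square_integrable: "integrable M (\<lambda>\<omega>. (Y0 \<omega>)\<^sup>2)"
    and Y1_square_integrable: "integrable M (\<lambda>\<omega>. (Y1 \<omega>)\<^sup>2)"
    and A_measurable [measurable]: "A \<in> borel_measurable M"
    and A_binary: "\<forall>\<omega>\<in>space M. A \<omega> \<in> {0, 1}"
    and Z_measurable [measurable]: "Z \<in> measurable M (MZK MZ K)"
    and W_measurable [measurable]: "W \<in> measurable M MW"
    and X_measurable [measurable]: "X \<in> measurable M MX"
    and U_measurable: "U \<in> measurable M MU"
    and consistency: "AE \<omega> in M. (A \<omega> = 1 \<longrightarrow> Y \<omega> = Y1 \<omega>) \<and> (A \<omega> = 0 \<longrightarrow> Y \<omega> = Y0 \<omega>)"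
    and valid: "valid_proxies M Y0 Y1 Y A Z MZ K W MW X MX U MU \<nu>"
begin

abbreviation "G_UZX \<equiv> F_UZX M U MU Z MZ K \<nu> X MX"
abbreviation "G_UAZX \<equiv> F_UAZX M U MU A Z MZ K \<nu> X MX"
abbreviation "G_WX \<equiv> gen M (ev M W MW \<union> ev M X MX)"
abbreviation "G_WAX \<equiv> gen M (ev M W MW \<union> ev M A borel \<union> ev M X MX)"
abbreviation "ZAX \<equiv> MZK MZ K \<Otimes>\<^sub>M ((borel :: real measure) \<Otimes>\<^sub>M MX)"

lemma proxies_subset_indices: "\<nu> \<subseteq> {1..K}"
  using valid unfolding valid_proxies_def by blast

lemma events_subset_sets:
  shows "ev M U MU \<subseteq> sets M" "ev M A borel \<subseteq> sets M" "ev M W MW \<subseteq> sets M" "ev M X MX \<subseteq> sets M"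
    and "Zev M Z MZ \<nu> \<subseteq> sets M" "Zev M Z MZ ({1..K} - \<nu>) \<subseteq> sets M"
  using proxies_subset_indices U_measurable
  by (auto intro!: ev_subset_sets Zev_subset_sets[OF Z_measurable])

lemma generators_subset_G_UZX: "Zev M Z MZ ({1..K} - \<nu>) \<union> ev M X MX \<subseteq> sets G_UZX"
  unfolding F_UZX_def using events_subset_sets by (auto simp: sets_gen)

lemma generators_subset_G_UAZX: "ev M A borel \<union> Zev M Z MZ ({1..K} - \<nu>) \<union> ev M X MX \<subseteq> sets G_UAZX"
  unfolding F_UAZX_def using events_subset_sets by (auto simp: sets_gen)

lemma subalgebra_G_UZX: "subalgebra M G_UZX"
  unfolding F_UZX_def using events_subset_sets by (intro subalgebra_gen) auto

lemma subalgebra_G_UAZX: "subalgebra M G_UAZX"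
  unfolding F_UAZX_def using events_subset_sets by (intro subalgebra_gen) auto

lemma subalgebra_G_UAZX_G_UZX: "subalgebra G_UAZX G_UZX"
  unfolding F_UZX_def F_UAZX_def using events_subset_sets by (intro subalgebra_gen_mono) auto

lemma A_measurable_G_UAZX: "A \<in> borel_measurable G_UAZX"
  unfolding F_UAZX_def using events_subset_sets by (intro measurable_gen) auto

lemma subalgebra_G_WX: "subalgebra M G_WX"
  using events_subset_sets by (intro subalgebra_gen) auto

lemma subalgebra_G_WAX: "subalgebra M G_WAX"
  using events_subset_sets by (intro subalgebra_gen) auto

lemma sets_G_WAX: "sets G_WAX = sigma_sets (space M) (ev M A borel \<union> sets G_WX)"
proof -
  have "sigma_sets (space M) (ev M W MW \<union> ev M A borel \<union> ev M X MX)
      = sigma_sets (space M) (ev M A borel \<union> sigma_sets (space M) (ev M W MW \<union> ev M X MX))"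
  proof (rule sigma_sets_eqI)
    fix C assume "C \<in> ev M A borel \<union> sigma_sets (space M) (ev M W MW \<union> ev M X MX)"
    then show "C \<in> sigma_sets (space M) (ev M W MW \<union> ev M A borel \<union> ev M X MX)"
      using sigma_sets_mono'[of "ev M W MW \<union> ev M X MX" "ev M W MW \<union> ev M A borel \<union> ev M X MX" "space M"]
      by blast
  qed blast
  then show ?thesis
    using events_subset_sets by (simp add: sets_gen)
qed

lemma sets_G_WX_subset: "sets G_WX \<subseteq> sets (gen M (ev M W MW \<union> sets G_UZX))"
proof -
  have "ev M W MW \<union> ev M X MX \<subseteq> ev M W MW \<union> sets G_UZX"
    using generators_subset_G_UZX by blast
  moreover have "ev M W MW \<union> sets G_UZX \<subseteq> sets M"
    using events_subset_sets subalgebra_G_UZX by (auto simp: subalgebra_def)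
  ultimately show ?thesis
    using subalgebra_gen_mono unfolding subalgebra_def by blast
qed

lemma proxy_measurable_gen:
  assumes q: "q \<in> borel_measurable ZAX"
    and S: "Zev M Z MZ {1..K} \<union> ev M A borel \<union> ev M X MX \<subseteq> S" "S \<subseteq> sets M"
  shows "(\<lambda>\<omega>. q (Z \<omega>, A \<omega>, X \<omega>)) \<in> borel_measurable (gen M S)"
proof -
  have [measurable]: "Z \<in> measurable (gen M S) (MZK MZ K)"
    using S by (intro measurable_Z_gen[OF Z_measurable]) auto
  have [measurable]: "A \<in> borel_measurable (gen M S)" "X \<in> measurable (gen M S) MX"
    using S by (auto intro!: measurable_gen)
  show ?thesis
    using q by measurable
qed

lemma Zev_split: "Zev M Z MZ {1..K} = Zev M Z MZ \<nu> \<union> Zev M Z MZ ({1..K} - \<nu>)"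
  using proxies_subset_indices unfolding Zev_def by blast

lemma
  assumes q: "q \<in> borel_measurable ZAX"
  shows proxy_measurable_G_UAZX:
      "(\<lambda>\<omega>. q (Z \<omega>, A \<omega>, X \<omega>)) \<in> borel_measurable (gen M (Zev M Z MZ \<nu> \<union> sets G_UAZX))"
    and proxy_measurable_G_UZX:
      "(\<lambda>\<omega>. q (Z \<omega>, A \<omega>, X \<omega>)) \<in> borel_measurable (gen M (Zev M Z MZ \<nu> \<union> ev M A borel \<union> sets G_UZX))"
proof -
  have sets: "sets G_UAZX \<subseteq> sets M" "sets G_UZX \<subseteq> sets M"
    using subalgebra_G_UAZX subalgebra_G_UZX by (auto simp: subalgebra_def)
  show "(\<lambda>\<omega>. q (Z \<omega>, A \<omega>, X \<omega>)) \<in> borel_measurable (gen M (Zev M Z MZ \<nu> \<union> sets G_UAZX))"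
  proof (rule proxy_measurable_gen[OF q])
    show "Zev M Z MZ {1..K} \<union> ev M A borel \<union> ev M X MX \<subseteq> Zev M Z MZ \<nu> \<union> sets G_UAZX"
      unfolding Zev_split using generators_subset_G_UAZX by blast
    show "Zev M Z MZ \<nu> \<union> sets G_UAZX \<subseteq> sets M"
      using sets(1) events_subset_sets(5) by blast
  qed
  show "(\<lambda>\<omega>. q (Z \<omega>, A \<omega>, X \<omega>)) \<in> borel_measurable (gen M (Zev M Z MZ \<nu> \<union> ev M A borel \<union> sets G_UZX))"
  proof (rule proxy_measurable_gen[OF q])
    show "Zev M Z MZ {1..K} \<union> ev M A borel \<union> ev M X MX \<subseteq> Zev M Z MZ \<nu> \<union> ev M A borel \<union> sets G_UZX"
      unfolding Zev_split using generators_subset_G_UZX by blast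
    show "Zev M Z MZ \<nu> \<union> ev M A borel \<union> sets G_UZX \<subseteq> sets M"
      using sets(2) events_subset_sets(2,5) by blast
  qed
qed

lemma
  shows cond_indep_treatment_Y0: "cond_indep M G_UZX (ev M A borel) (ev M Y0 borel)"
    and cond_indep_treatment_Y1: "cond_indep M G_UZX (ev M A borel) (ev M Y1 borel)"
    and cond_indep_proxies_Y: "cond_indep M G_UAZX (Zev M Z MZ \<nu>) (ev M Y borel)"
    and cond_indep_W_proxies: "cond_indep M G_UZX (ev M W MW) (Zev M Z MZ \<nu> \<union> ev M A borel)"
  using valid unfolding valid_proxies_def by blast+

lemma propensity_pos:
  assumes "a \<in> {0, 1}"
  shows "AE \<omega> in M. 0 < cprob M G_UZX {x \<in> space M. A x = a} \<omega>"
proof -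
  have "AE \<omega> in M. 0 < cprob M G_UZX {x \<in> space M. A x = a} \<omega> \<and> cprob M G_UZX {x \<in> space M. A x = a} \<omega> < 1"
    using valid assms unfolding valid_proxies_def by blast
  then show ?thesis
    by eventually_elim simp
qed

lemma Y_square_integrable: "integrable M (\<lambda>\<omega>. (Y \<omega>)\<^sup>2)"
proof (rule Bochner_Integration.integrable_bound)
  show "integrable M (\<lambda>\<omega>. (Y0 \<omega>)\<^sup>2 + (Y1 \<omega>)\<^sup>2)"
    using Y0_square_integrable Y1_square_integrable by auto
  show "AE \<omega> in M. norm ((Y \<omega>)\<^sup>2) \<le> norm ((Y0 \<omega>)\<^sup>2 + (Y1 \<omega>)\<^sup>2)"
    using consistency AE_space by eventually_elim (use A_binary in auto)
qed measurable

lemma weighted_outcome_eq: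
  assumes "\<omega> \<in> space M"
  shows "q (Z \<omega>, 1, X \<omega>) * A \<omega> * Y \<omega> - q (Z \<omega>, 0, X \<omega>) * (1 - A \<omega>) * Y \<omega>
    = indicator {x \<in> space M. A x = 1} \<omega> * Y \<omega> * q (Z \<omega>, A \<omega>, X \<omega>)
      - indicator {x \<in> space M. A x = 0} \<omega> * Y \<omega> * q (Z \<omega>, A \<omega>, X \<omega>)"
  using A_binary assms by auto

lemma integral_treatment_arm:
  assumes q: "q \<in> borel_measurable ZAX" "integrable M (\<lambda>\<omega>. (q (Z \<omega>, A \<omega>, X \<omega>))\<^sup>2)"
    and bridge: "AE \<omega> in M. real_cond_exp M G_UAZX (\<lambda>\<omega>. q (Z \<omega>, A \<omega>, X \<omega>)) \<omega> = 1 / propA M G_UZX A \<omega>"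
    and a: "a \<in> {0, 1}" and CI: "cond_indep M G_UZX (ev M A borel) (ev M Ya borel)"
    and Ya: "Ya \<in> borel_measurable M" "integrable M (\<lambda>\<omega>. (Ya \<omega>)\<^sup>2)"
    and consistent: "AE \<omega> in M. A \<omega> = a \<longrightarrow> Y \<omega> = Ya \<omega>"
  shows "(\<integral>\<omega>. indicator {x \<in> space M. A x = a} \<omega> * Y \<omega> * q (Z \<omega>, A \<omega>, X \<omega>) \<partial>M) = (\<integral>\<omega>. Ya \<omega> \<partial>M)"
proof (rule integral_outcome_bridge[OF subalgebra_G_UAZX subalgebra_G_UAZX_G_UZX A_measurable_G_UAZX
      events_subset_sets(5) proxy_measurable_G_UAZX[OF q(1)] q(2) Y_measurable Y_square_integrable Ya
      cond_indep_proxies_Y CI consistent])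
  show "AE \<omega> in M. 0 < cprob M G_UZX {x \<in> space M. A x = a} \<omega>"
    using a by (rule propensity_pos)
  show "AE \<omega> in M. \<omega> \<in> {x \<in> space M. A x = a} \<longrightarrow>
      real_cond_exp M G_UAZX (\<lambda>\<omega>. q (Z \<omega>, A \<omega>, X \<omega>)) \<omega> = 1 / cprob M G_UZX {x \<in> space M. A x = a} \<omega>"
    using bridge by (rule bridge_on_level_set)
qed

theorem ate_identification:
  assumes q: "q \<in> borel_measurable ZAX" "integrable M (\<lambda>\<omega>. (q (Z \<omega>, A \<omega>, X \<omega>))\<^sup>2)"
    and bridge: "AE \<omega> in M. real_cond_exp M G_UAZX (\<lambda>\<omega>. q (Z \<omega>, A \<omega>, X \<omega>)) \<omega> = 1 / propA M G_UZX A \<omega>"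
  shows "(\<integral>\<omega>. Y1 \<omega> - Y0 \<omega> \<partial>M)
    = (\<integral>\<omega>. q (Z \<omega>, 1, X \<omega>) * A \<omega> * Y \<omega> - q (Z \<omega>, 0, X \<omega>) * (1 - A \<omega>) * Y \<omega> \<partial>M)"
proof -
  let ?Q = "\<lambda>\<omega>. q (Z \<omega>, A \<omega>, X \<omega>)" and ?E = "\<lambda>a. {x \<in> space M. A x = a}"
  have Q_meas [measurable]: "?Q \<in> borel_measurable M"
    using q(1) by measurable
  have "AE \<omega> in M. A \<omega> = 1 \<longrightarrow> Y \<omega> = Y1 \<omega>"
    using consistency by eventually_elim simp
  then have arm1: "(\<integral>\<omega>. indicator (?E 1) \<omega> * Y \<omega> * ?Q \<omega> \<partial>M) = (\<integral>\<omega>. Y1 \<omega> \<partial>M)"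
    by (intro integral_treatment_arm[OF q bridge] cond_indep_treatment_Y1 Y1_measurable Y1_square_integrable) simp
  have "AE \<omega> in M. A \<omega> = 0 \<longrightarrow> Y \<omega> = Y0 \<omega>"
    using consistency by eventually_elim simp
  then have arm0: "(\<integral>\<omega>. indicator (?E 0) \<omega> * Y \<omega> * ?Q \<omega> \<partial>M) = (\<integral>\<omega>. Y0 \<omega> \<partial>M)"
    by (intro integral_treatment_arm[OF q bridge] cond_indep_treatment_Y0 Y0_measurable Y0_square_integrable) simp
  have int: "integrable M (\<lambda>\<omega>. indicator (?E a) \<omega> * Y \<omega> * ?Q \<omega>)" for a
  proof (rule Bochner_Integration.integrable_bound)
    show "integrable M (\<lambda>\<omega>. Y \<omega> * ?Q \<omega>)"
      using Y_square_integrable q(2) by (intro integrable_mult_of_square_integrable) auto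
    show "AE \<omega> in M. norm (indicator (?E a) \<omega> * Y \<omega> * ?Q \<omega>) \<le> norm (Y \<omega> * ?Q \<omega>)"
      by (intro AE_I2) (auto simp: indicator_def)
  qed measurable
  have "(\<integral>\<omega>. q (Z \<omega>, 1, X \<omega>) * A \<omega> * Y \<omega> - q (Z \<omega>, 0, X \<omega>) * (1 - A \<omega>) * Y \<omega> \<partial>M)
      = (\<integral>\<omega>. indicator (?E 1) \<omega> * Y \<omega> * ?Q \<omega> - indicator (?E 0) \<omega> * Y \<omega> * ?Q \<omega> \<partial>M)"
    by (rule Bochner_Integration.integral_cong[OF refl weighted_outcome_eq])
  also have "\<dots> = (\<integral>\<omega>. Y1 \<omega> \<partial>M) - (\<integral>\<omega>. Y0 \<omega> \<partial>M)"
    by (simp only: Bochner_Integration.integral_diff[OF int int] arm1 arm0)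
  also have "\<dots> = (\<integral>\<omega>. Y1 \<omega> - Y0 \<omega> \<partial>M)"
    using square_integrable_imp_integrable[OF Y1_measurable Y1_square_integrable]
      square_integrable_imp_integrable[OF Y0_measurable Y0_square_integrable]
    by (rule Bochner_Integration.integral_diff[symmetric])
  finally show ?thesis ..
qed

theorem observed_bridge:
  assumes q: "q \<in> borel_measurable ZAX" "integrable M (\<lambda>\<omega>. (q (Z \<omega>, A \<omega>, X \<omega>))\<^sup>2)"
    and bridge: "AE \<omega> in M. real_cond_exp M G_UAZX (\<lambda>\<omega>. q (Z \<omega>, A \<omega>, X \<omega>)) \<omega> = 1 / propA M G_UZX A \<omega>"
  shows "AE \<omega> in M. real_cond_exp M G_WAX (\<lambda>\<omega>. q (Z \<omega>, A \<omega>, X \<omega>)) \<omega> = 1 / propA M G_WX A \<omega>"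
proof -
  let ?Q = "\<lambda>\<omega>. q (Z \<omega>, A \<omega>, X \<omega>)" and ?E = "\<lambda>a. {x \<in> space M. A x = a}"
  have Q_int: "integrable M ?Q"
    by (rule square_integrable_imp_integrable[OF _ q(2)]) (use q(1) in measurable)
  have level: "AE \<omega> in M. A \<omega> = a \<longrightarrow> real_cond_exp M G_WAX ?Q \<omega> * cprob M G_WX (?E a) \<omega> = 1"
    if a: "a \<in> {0, 1}" for a
  proof -
    have "AE \<omega> in M. real_cond_exp M G_WX (\<lambda>\<omega>. indicator (?E a) \<omega> * ?Q \<omega>) \<omega> = 1"
    proof (rule cond_exp_indicator_mult_bridge_cond_indep[OF subalgebra_G_UAZX subalgebra_G_UAZX_G_UZX
          A_measurable_G_UAZX events_subset_sets(5,3) proxy_measurable_G_UZX[OF q(1)] Q_int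
          cond_indep_sym[OF cond_indep_W_proxies] subalgebra_G_WX])
      show "sets G_WX \<subseteq> sets (gen M (ev M W MW \<union> sets G_UZX))"
        by (rule sets_G_WX_subset)
      show "AE \<omega> in M. 0 < cprob M G_UZX (?E a) \<omega>"
        using a by (rule propensity_pos)
      show "AE \<omega> in M. \<omega> \<in> ?E a \<longrightarrow> real_cond_exp M G_UAZX ?Q \<omega> = 1 / cprob M G_UZX (?E a) \<omega>"
        using bridge by (rule bridge_on_level_set)
    qed
    moreover have "AE \<omega> in M. \<omega> \<in> ?E a \<longrightarrow>
        real_cond_exp M G_WAX ?Q \<omega> * cprob M G_WX (?E a) \<omega> = real_cond_exp M G_WX (\<lambda>\<omega>. indicator (?E a) \<omega> * ?Q \<omega>) \<omega>"
      by (rule cond_exp_join_level_set[OF subalgebra_G_WX subalgebra_G_WAX sets_G_WAX A_measurable Q_int])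
    ultimately show ?thesis
      using AE_space by eventually_elim auto
  qed
  show ?thesis
    using level[OF insertI1] level[OF insertI2[OF singletonI]] AE_space
  proof eventually_elim
    case (elim \<omega>)
    then have prod: "real_cond_exp M G_WAX ?Q \<omega> * cprob M G_WX (?E (A \<omega>)) \<omega> = 1"
      using A_binary by auto
    then have "cprob M G_WX (?E (A \<omega>)) \<omega> \<noteq> 0"
      by auto
    with prod show ?case
      by (simp add: propA_def eq_divide_eq)
  qed
qed

lemma integral_weighted_outcome_cong:
  assumes [measurable]: "q \<in> borel_measurable ZAX" "q' \<in> borel_measurable ZAX"
    and eq: "AE \<omega> in M. q (Z \<omega>, A \<omega>, X \<omega>) = q' (Z \<omega>, A \<omega>, X \<omega>)"
  shows "(\<integral>\<omega>. q (Z \<omega>, 1, X \<omega>) * A \<omega> * Y \<omega> - q (Z \<omega>, 0, X \<omega>) * (1 - A \<omega>) * Y \<omega> \<partial>M)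
    = (\<integral>\<omega>. q' (Z \<omega>, 1, X \<omega>) * A \<omega> * Y \<omega> - q' (Z \<omega>, 0, X \<omega>) * (1 - A \<omega>) * Y \<omega> \<partial>M)"
proof (rule integral_cong_AE)
  show "AE \<omega> in M. q (Z \<omega>, 1, X \<omega>) * A \<omega> * Y \<omega> - q (Z \<omega>, 0, X \<omega>) * (1 - A \<omega>) * Y \<omega>
      = q' (Z \<omega>, 1, X \<omega>) * A \<omega> * Y \<omega> - q' (Z \<omega>, 0, X \<omega>) * (1 - A \<omega>) * Y \<omega>"
    using eq AE_space by eventually_elim (simp add: weighted_outcome_eq)
qed measurable

lemma observed_measurable_G_WAX:
  shows "W \<in> measurable G_WAX MW" "A \<in> borel_measurable G_WAX" "X \<in> measurable G_WAX MX"
  using events_subset_sets by (auto intro!: measurable_gen)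

lemma observed_bridge_difference_orthogonal:
  assumes q: "q \<in> borel_measurable ZAX" "integrable M (\<lambda>\<omega>. (q (Z \<omega>, A \<omega>, X \<omega>))\<^sup>2)"
    and q': "q' \<in> borel_measurable ZAX" "integrable M (\<lambda>\<omega>. (q' (Z \<omega>, A \<omega>, X \<omega>))\<^sup>2)"
    and eq: "AE \<omega> in M. real_cond_exp M G_WAX (\<lambda>\<omega>. q (Z \<omega>, A \<omega>, X \<omega>)) \<omega>
      = real_cond_exp M G_WAX (\<lambda>\<omega>. q' (Z \<omega>, A \<omega>, X \<omega>)) \<omega>"
    and h: "h \<in> L2fun M (\<lambda>\<omega>. (W \<omega>, A \<omega>, X \<omega>)) (MW \<Otimes>\<^sub>M (borel \<Otimes>\<^sub>M MX))"
  shows "(\<integral>\<omega>. h (W \<omega>, A \<omega>, X \<omega>) * (signA (A \<omega>) * (q (Z \<omega>, A \<omega>, X \<omega>) - q' (Z \<omega>, A \<omega>, X \<omega>))) \<partial>M) = 0"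
proof -
  have [measurable]: "h \<in> borel_measurable (MW \<Otimes>\<^sub>M (borel \<Otimes>\<^sub>M MX))"
    and h_square: "integrable M (\<lambda>\<omega>. (h (W \<omega>, A \<omega>, X \<omega>))\<^sup>2)"
    using h unfolding L2fun_def by auto
  note observed_measurable_G_WAX [measurable] q(1) [measurable] q'(1) [measurable]
  have "(\<integral>\<omega>. h (W \<omega>, A \<omega>, X \<omega>) * (signA (A \<omega>) * (q (Z \<omega>, A \<omega>, X \<omega>) - q' (Z \<omega>, A \<omega>, X \<omega>))) \<partial>M)
      = (\<integral>\<omega>. (h (W \<omega>, A \<omega>, X \<omega>) * signA (A \<omega>)) * (q (Z \<omega>, A \<omega>, X \<omega>) - q' (Z \<omega>, A \<omega>, X \<omega>)) \<partial>M)"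
    by (simp add: ac_simps)
  also have "\<dots> = 0"
  proof (rule integral_mult_diff_eq_zero_of_cond_exp_eq[OF subalgebra_G_WAX _ _ _ q(2) _ q'(2) eq])
    show "(\<lambda>\<omega>. h (W \<omega>, A \<omega>, X \<omega>) * signA (A \<omega>)) \<in> borel_measurable G_WAX"
      by measurable
    show "integrable M (\<lambda>\<omega>. (h (W \<omega>, A \<omega>, X \<omega>) * signA (A \<omega>))\<^sup>2)"
      using h_square by (simp add: power_mult_distrib power2_eq_square[of "signA _"])
  qed measurable
  finally show ?thesis .
qed

theorem bridge_unique:
  assumes complete: "\<forall>g\<in>Hgam M Z MZ K A X MX \<gamma>.
      (\<forall>h\<in>L2fun M (\<lambda>\<omega>. (W \<omega>, A \<omega>, X \<omega>)) (MW \<Otimes>\<^sub>M (borel \<Otimes>\<^sub>M MX)).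
          integral\<^sup>L M (\<lambda>\<omega>. h (W \<omega>, A \<omega>, X \<omega>) * g (Z \<omega>, A \<omega>, X \<omega>)) = 0)
      \<longleftrightarrow> (AE \<omega> in M. g (Z \<omega>, A \<omega>, X \<omega>) = 0)"
    and q: "(\<lambda>(z, a, x). signA a * q (z, a, x)) \<in> Hgam M Z MZ K A X MX \<gamma>"
      "AE \<omega> in M. real_cond_exp M G_WAX (\<lambda>\<omega>. q (Z \<omega>, A \<omega>, X \<omega>)) \<omega> = 1 / propA M G_WX A \<omega>"
    and q': "(\<lambda>(z, a, x). signA a * q' (z, a, x)) \<in> Hgam M Z MZ K A X MX \<gamma>"
      "AE \<omega> in M. real_cond_exp M G_WAX (\<lambda>\<omega>. q' (Z \<omega>, A \<omega>, X \<omega>)) \<omega> = 1 / propA M G_WX A \<omega>"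
  shows "AE \<omega> in M. q (Z \<omega>, A \<omega>, X \<omega>) = q' (Z \<omega>, A \<omega>, X \<omega>)"
proof -
  let ?Q = "\<lambda>\<omega>. q (Z \<omega>, A \<omega>, X \<omega>)" and ?Q' = "\<lambda>\<omega>. q' (Z \<omega>, A \<omega>, X \<omega>)"
  let ?g = "\<lambda>p. (\<lambda>(z, a, x). signA a * q (z, a, x)) p - (\<lambda>(z, a, x). signA a * q' (z, a, x)) p"
  have g_Hgam: "?g \<in> Hgam M Z MZ K A X MX \<gamma>"
    by (rule Hgam_diff[OF Z_measurable A_measurable X_measurable q(1) q'(1)])
  have g_eq: "?g (Z \<omega>, A \<omega>, X \<omega>) = signA (A \<omega>) * (?Q \<omega> - ?Q' \<omega>)" for \<omega>
    by (simp add: right_diff_distrib)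
  have "AE \<omega> in M. real_cond_exp M G_WAX ?Q \<omega> = real_cond_exp M G_WAX ?Q' \<omega>"
    using q(2) q'(2) by eventually_elim simp
  note orthogonal = observed_bridge_difference_orthogonal[OF signed_in_HgamD[OF q(1)] signed_in_HgamD[OF q'(1)] this]
  have "\<forall>h\<in>L2fun M (\<lambda>\<omega>. (W \<omega>, A \<omega>, X \<omega>)) (MW \<Otimes>\<^sub>M (borel \<Otimes>\<^sub>M MX)).
      integral\<^sup>L M (\<lambda>\<omega>. h (W \<omega>, A \<omega>, X \<omega>) * ?g (Z \<omega>, A \<omega>, X \<omega>)) = 0"
    unfolding g_eq using orthogonal by blast
  then have "AE \<omega> in M. ?g (Z \<omega>, A \<omega>, X \<omega>) = 0"
    by (rule iffD1[OF bspec[OF complete g_Hgam]])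
  then show ?thesis
    by eventually_elim (simp add: g_eq)
qed

corollary unique_bridge_identifies_ate:
  assumes complete: "\<forall>g\<in>Hgam M Z MZ K A X MX \<gamma>.
      (\<forall>h\<in>L2fun M (\<lambda>\<omega>. (W \<omega>, A \<omega>, X \<omega>)) (MW \<Otimes>\<^sub>M (borel \<Otimes>\<^sub>M MX)).
          integral\<^sup>L M (\<lambda>\<omega>. h (W \<omega>, A \<omega>, X \<omega>) * g (Z \<omega>, A \<omega>, X \<omega>)) = 0)
      \<longleftrightarrow> (AE \<omega> in M. g (Z \<omega>, A \<omega>, X \<omega>) = 0)"
    and q: "(\<lambda>(z, a, x). signA a * q (z, a, x)) \<in> Hgam M Z MZ K A X MX \<gamma>"
      "AE \<omega> in M. real_cond_exp M G_WAX (\<lambda>\<omega>. q (Z \<omega>, A \<omega>, X \<omega>)) \<omega> = 1 / propA M G_WX A \<omega>"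
    and q': "(\<lambda>(z, a, x). signA a * q' (z, a, x)) \<in> Hgam M Z MZ K A X MX \<gamma>"
      "AE \<omega> in M. real_cond_exp M G_UAZX (\<lambda>\<omega>. q' (Z \<omega>, A \<omega>, X \<omega>)) \<omega> = 1 / propA M G_UZX A \<omega>"
  shows "(AE \<omega> in M. q (Z \<omega>, A \<omega>, X \<omega>) = q' (Z \<omega>, A \<omega>, X \<omega>))
    \<and> (\<integral>\<omega>. Y1 \<omega> - Y0 \<omega> \<partial>M)
      = (\<integral>\<omega>. q (Z \<omega>, 1, X \<omega>) * A \<omega> * Y \<omega> - q (Z \<omega>, 0, X \<omega>) * (1 - A \<omega>) * Y \<omega> \<partial>M)"
proof
  note q'_regular = signed_in_HgamD[OF q'(1)]
  show eq: "AE \<omega> in M. q (Z \<omega>, A \<omega>, X \<omega>) = q' (Z \<omega>, A \<omega>, X \<omega>)"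
    by (rule bridge_unique[OF complete q q'(1) observed_bridge[OF q'_regular q'(2)]])
  have "(\<integral>\<omega>. Y1 \<omega> - Y0 \<omega> \<partial>M)
      = (\<integral>\<omega>. q' (Z \<omega>, 1, X \<omega>) * A \<omega> * Y \<omega> - q' (Z \<omega>, 0, X \<omega>) * (1 - A \<omega>) * Y \<omega> \<partial>M)"
    by (rule ate_identification[OF q'_regular q'(2)])
  also have "\<dots> = (\<integral>\<omega>. q (Z \<omega>, 1, X \<omega>) * A \<omega> * Y \<omega> - q (Z \<omega>, 0, X \<omega>) * (1 - A \<omega>) * Y \<omega> \<partial>M)"
    using eq by (intro integral_weighted_outcome_cong[OF q'_regular(1) signed_in_HgamD(1)[OF q(1)]]) auto
  finally show "(\<integral>\<omega>. Y1 \<omega> - Y0 \<omega> \<partial>M)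
      = (\<integral>\<omega>. q (Z \<omega>, 1, X \<omega>) * A \<omega> * Y \<omega> - q (Z \<omega>, 0, X \<omega>) * (1 - A \<omega>) * Y \<omega> \<partial>M)" .
qed

end

theorem theoremA2:
  fixes M :: "'w measure"
    and Y Y0 Y1 A :: "'w \<Rightarrow> real"
    and Z :: "'w \<Rightarrow> nat \<Rightarrow> 'z" and MZ :: "'z measure"
    and W :: "'w \<Rightarrow> 'c" and MW :: "'c measure"
    and X :: "'w \<Rightarrow> 'x" and MX :: "'x measure"
    and U :: "'w \<Rightarrow> 'u" and MU :: "'u measure"
    and K \<gamma> :: nat and \<nu>s :: "nat set"
    and q' :: "(nat \<Rightarrow> 'z) \<times> real \<times> 'x \<Rightarrow> real"
  assumes P: "prob_space M"
    and Ym: "Y \<in> borel_measurable M" and Y0m: "Y0 \<in> borel_measurable M" and Y1m: "Y1 \<in> borel_measurable M"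
    and Y0sq: "integrable M (\<lambda>\<omega>. (Y0 \<omega>)\<^sup>2)" and Y1sq: "integrable M (\<lambda>\<omega>. (Y1 \<omega>)\<^sup>2)"
    and Am: "A \<in> borel_measurable M" and A01: "\<forall>\<omega>\<in>space M. A \<omega> \<in> {0, 1}"
    and Zm: "Z \<in> measurable M (MZK MZ K)"
    and Wm: "W \<in> measurable M MW" and Xm: "X \<in> measurable M MX" and Um: "U \<in> measurable M MU"
    and consistency: "AE \<omega> in M. (A \<omega> = 1 \<longrightarrow> Y \<omega> = Y1 \<omega>) \<and> (A \<omega> = 0 \<longrightarrow> Y \<omega> = Y0 \<omega>)"
    and gam: "\<gamma> \<in> {1..K}"
    and valid: "valid_proxies M Y0 Y1 Y A Z MZ K W MW X MX U MU \<nu>s"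
    and card: "card \<nu>s \<ge> \<gamma>"
    and q'H: "(\<lambda>(z, a, x). signA a * q' (z, a, x)) \<in> Hgam M Z MZ K A X MX \<gamma>"
    and q'bridge: "AE \<omega> in M.
        real_cond_exp M (F_UAZX M U MU A Z MZ K \<nu>s X MX) (\<lambda>\<omega>. q' (Z \<omega>, A \<omega>, X \<omega>)) \<omega>
          = 1 / propA M (F_UZX M U MU Z MZ K \<nu>s X MX) A \<omega>"
  shows "(integral\<^sup>L M (\<lambda>\<omega>. Y1 \<omega> - Y0 \<omega>)
            = integral\<^sup>L M (\<lambda>\<omega>. q' (Z \<omega>, 1, X \<omega>) * A \<omega> * Y \<omega> - q' (Z \<omega>, 0, X \<omega>) * (1 - A \<omega>) * Y \<omega>)
          \<and> (AE \<omega> in M.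
               real_cond_exp M (gen M (ev M W MW \<union> ev M A borel \<union> ev M X MX)) (\<lambda>\<omega>. q' (Z \<omega>, A \<omega>, X \<omega>)) \<omega>
                 = 1 / propA M (gen M (ev M W MW \<union> ev M X MX)) A \<omega>))
       \<and> ((\<forall>g\<in>Hgam M Z MZ K A X MX \<gamma>.
              (\<forall>h\<in>L2fun M (\<lambda>\<omega>. (W \<omega>, A \<omega>, X \<omega>)) (MW \<Otimes>\<^sub>M (borel \<Otimes>\<^sub>M MX)).
                  integral\<^sup>L M (\<lambda>\<omega>. h (W \<omega>, A \<omega>, X \<omega>) * g (Z \<omega>, A \<omega>, X \<omega>)) = 0)
              \<longleftrightarrow> (AE \<omega> in M. g (Z \<omega>, A \<omega>, X \<omega>) = 0))
          \<longrightarrow> (\<forall>q :: (nat \<Rightarrow> 'z) \<times> real \<times> 'x \<Rightarrow> real.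
                 (\<lambda>(z, a, x). signA a * q (z, a, x)) \<in> Hgam M Z MZ K A X MX \<gamma>
                 \<and> (AE \<omega> in M.
                      real_cond_exp M (gen M (ev M W MW \<union> ev M A borel \<union> ev M X MX)) (\<lambda>\<omega>. q (Z \<omega>, A \<omega>, X \<omega>)) \<omega>
                        = 1 / propA M (gen M (ev M W MW \<union> ev M X MX)) A \<omega>)
                 \<longrightarrow> (AE \<omega> in M. q (Z \<omega>, A \<omega>, X \<omega>) = q' (Z \<omega>, A \<omega>, X \<omega>))
                   \<and> integral\<^sup>L M (\<lambda>\<omega>. Y1 \<omega> - Y0 \<omega>)
                       = integral\<^sup>L M (\<lambda>\<omega>. q (Z \<omega>, 1, X \<omega>) * A \<omega> * Y \<omega> - q (Z \<omega>, 0, X \<omega>) * (1 - A \<omega>) * Y \<omega>)))"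
proof -
  interpret proxy_model M Y Y0 Y1 A Z MZ W MW X MX U MU K \<nu>s
    using P Ym Y0m Y1m Y0sq Y1sq Am A01 Zm Wm Xm Um consistency valid
    by (intro proxy_model.intro proxy_model_axioms.intro)
  note q'_regular = signed_in_HgamD[OF q'H]
  show ?thesis
    using ate_identification[OF q'_regular q'bridge] observed_bridge[OF q'_regular q'bridge]
      unique_bridge_identifies_ate[OF _ _ _ q'H q'bridge] by blast
qed

end
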